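(* Let $\alpha>1$, $\delta\in(0,\alpha-1)$, $\tau\in(0,\alpha-1-\delta]$, $d\in\mathbb N$, $1\ge\gamma_1\ge\dots\ge\gamma_d>0$, and $g\in H_{\alpha,\boldsymbol\gamma,d}$. Let $\boldsymbol x_1,\dots,\boldsymbol x_N\in[0,1]^d$, $c_1,\dots,c_N\in\mathbb R$. Let $L$ be a prime and $\mathcal Z=\{\boldsymbol z_0,\dots,\boldsymbol z_{L-1}\}$ a rank-1 lattice point set of size $L$ satisfying $e(H_{\beta,\boldsymbol\gamma,d},\mathcal Z)\le C_{\boldsymbol\gamma,d}(\beta,\tau')L^{-\beta+\tau'}$ for all $\tau'\in(0,\beta-\frac12]$, where $\beta=\alpha-\frac12-\delta$. Then for $\nu>1$, with $K=R^\alpha_{\nu,\boldsymbol\gamma,d}$, $$\mathrm{err}_1(g,\mathcal C)+\mathrm{err}_2(g,\mathcal C)\lesssim\|g\|_{H_{\alpha,\boldsymbol\gamma,d}}\Big(\frac1{\nu^{\frac12-\frac1{4\alpha}}}+\frac{\nu^{(\frac12+\frac1{4\alpha})d}}{L^{\alpha-\frac12-\delta-\tau}}c_{\alpha,\boldsymbol\gamma,d}\,\zeta_{\delta,d}\,C_{\boldsymbol\gamma,d}\big(\alpha-\tfrac12-\delta,\tau\big)\Big)\overline\mu_N,$$ where the implicit constant depends on $d$, $\alpha$ and $(\gamma_j)_{j\in[d]}$.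
   Context: $r_\beta(\gamma,h)=\max(|h|^{2\beta}/\gamma,1)$, $r_\beta(\boldsymbol\gamma,\boldsymbol k)=\prod_jr_\beta(\gamma_j,k_j)$; $\omega_{\boldsymbol k}(\boldsymbol x)=\exp(2\pi i\,\boldsymbol k\cdot\boldsymbol x)$, $\widehat f_{\boldsymbol k}=\int_{[0,1]^d}f\,\overline{\omega_{\boldsymbol k}}$. Weighted Korobov space ($\beta>1/2$): $H_{\beta,\boldsymbol\gamma,d}=\{f\in L_2([0,1]^d):\|f\|_{H_{\beta,\boldsymbol\gamma,d}}=(\sum_{\boldsymbol k}r_\beta(\boldsymbol\gamma,\boldsymbol k)|\widehat f_{\boldsymbol k}|^2)^{1/2}<\infty\}$. $R^\alpha_{\nu,\boldsymbol\gamma,d}=\{\boldsymbol k\in\mathbb Z^d:\max_jr_\alpha(\gamma_j,k_j)\le\nu\}$. $\phi_K(\boldsymbol x)=\sum_{\boldsymbol k\in K}\check\phi_{\boldsymbol k}\overline{\omega_{\boldsymbol k}(\boldsymbol x)}$, $\check\phi_{\boldsymbol k}=\frac1N\sum_nc_n\omega_{\boldsymbol k}(\boldsymbol x_n)$; $\mathcal C=(c_n)$; $\mathrm{err}_1(g,\mathcal C)=|\frac1N\sum_nc_ng(\boldsymbol x_n)-\int g\phi_K|$, $\mathrm{err}_2(g,\mathcal C)=|\int g\phi_K-\frac1L\sum_\ell(g\phi_K)(\boldsymbol z_\ell)|$. Rank-1 lattice: $\{\boldsymbol z_\ell=(\ell\mathfrak g/L)\bmod1\}$, $\mathfrak g\in\{1,\dots,L-1\}^d$.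 $e(H_{\beta,\boldsymbol\gamma,d},\mathcal Z)=\sup_{\|f\|\le1}|\int f-\frac1L\sum_\ell f(\boldsymbol z_\ell)|$. $C_{\boldsymbol\gamma,d}(\beta,\tau)=2^{\beta-\tau}\prod_j[1+2\gamma_j^{1/(2(\beta-\tau))}\zeta(\frac\beta{\beta-\tau})]^{\beta-\tau}$; $\overline\mu_N=\frac1N\sum_n|c_n|$; $c_{\alpha,\boldsymbol\gamma,d}=\sqrt{\prod_j\max(1,2^{2\alpha}\gamma_j)}$; $\zeta_{\delta,d}=[1+2\zeta(1+2\delta)]^{d/2}$; $\zeta$ Riemann zeta. *)

theory Defs
  imports "HOL-Analysis.Analysis" "HOL-Probability.Probability"
begin

text \<open>Dimension d: points of [0,1]^d are extensional functions nat => real on {..<d};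
  frequencies k in Z^d are functions nat => int vanishing outside {..<d}.\<close>

definition cube :: "nat \<Rightarrow> (nat \<Rightarrow> real) set" where
  "cube d = PiE {..<d} (\<lambda>_. {0..1})"

definition cube_measure :: "nat \<Rightarrow> (nat \<Rightarrow> real) measure" where
  "cube_measure d = PiM {..<d} (\<lambda>_. restrict_space lborel {0..1})"

definition Zd :: "nat \<Rightarrow> (nat \<Rightarrow> int) set" where
  "Zd d = {k. \<forall>j\<ge>d. k j = 0}"

definition rzeta :: "real \<Rightarrow> real" where
  "rzeta s = (\<Sum>n. 1 / real (Suc n) powr s)"

definition r1 :: "real \<Rightarrow> real \<Rightarrow> int \<Rightarrow> real" where
  "r1 \<beta> \<gamma> h = max (\<bar>real_of_int h\<bar> powr (2 * \<beta>) / \<gamma>) 1"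

definition rw :: "real \<Rightarrow> (nat \<Rightarrow> real) \<Rightarrow> nat \<Rightarrow> (nat \<Rightarrow> int) \<Rightarrow> real" where
  "rw \<beta> \<gamma> d k = (\<Prod>j<d. r1 \<beta> (\<gamma> j) (k j))"

definition omega :: "nat \<Rightarrow> (nat \<Rightarrow> int) \<Rightarrow> (nat \<Rightarrow> real) \<Rightarrow> complex" where
  "omega d k x = cis (2 * pi * (\<Sum>j<d. real_of_int (k j) * x j))"

definition fourier :: "nat \<Rightarrow> ((nat \<Rightarrow> real) \<Rightarrow> complex) \<Rightarrow> (nat \<Rightarrow> int) \<Rightarrow> complex" where
  "fourier d f k = integral\<^sup>L (cube_measure d) (\<lambda>x. f x * cnj (omega d k x))"

definition korobov_norm :: "real \<Rightarrow> (nat \<Rightarrow> real) \<Rightarrow> nat \<Rightarrow> ((nat \<Rightarrow> real) \<Rightarrow> complex) \<Rightarrow> real" where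
  "korobov_norm \<beta> \<gamma> d f = sqrt (\<Sum>\<^sub>\<infinity>k\<in>Zd d. rw \<beta> \<gamma> d k * (cmod (fourier d f k))\<^sup>2)"

text \<open>Weighted Korobov space; functions are identified with the (pointwise) sum of their
  Fourier series on the cube (the continuous representative).\<close>
definition korobov :: "real \<Rightarrow> (nat \<Rightarrow> real) \<Rightarrow> nat \<Rightarrow> ((nat \<Rightarrow> real) \<Rightarrow> complex) set" where
  "korobov \<beta> \<gamma> d = {f.
     f \<in> borel_measurable (cube_measure d) \<and>
     integrable (cube_measure d) (\<lambda>x. (cmod (f x))\<^sup>2) \<and>
     (\<lambda>k. rw \<beta> \<gamma> d k * (cmod (fourier d f k))\<^sup>2) summable_on Zd d \<and>
     (\<forall>x\<in>cube d. ((\<lambda>k. fourier d f k * omega d k x) has_sum f x) (Zd d))}"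

definition Rset :: "real \<Rightarrow> real \<Rightarrow> (nat \<Rightarrow> real) \<Rightarrow> nat \<Rightarrow> (nat \<Rightarrow> int) set" where
  "Rset \<alpha> \<nu> \<gamma> d = {k \<in> Zd d. \<forall>j<d. r1 \<alpha> (\<gamma> j) (k j) \<le> \<nu>}"

definition phi_check :: "nat \<Rightarrow> nat \<Rightarrow> (nat \<Rightarrow> nat \<Rightarrow> real) \<Rightarrow> (nat \<Rightarrow> real) \<Rightarrow> (nat \<Rightarrow> int) \<Rightarrow> complex" where
  "phi_check d N xs c k = (1 / of_nat N) * (\<Sum>n<N. complex_of_real (c n) * omega d k (xs n))"

definition phi_K :: "nat \<Rightarrow> (nat \<Rightarrow> int) set \<Rightarrow> nat \<Rightarrow> (nat \<Rightarrow> nat \<Rightarrow> real) \<Rightarrow> (nat \<Rightarrow> real)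
    \<Rightarrow> (nat \<Rightarrow> real) \<Rightarrow> complex" where
  "phi_K d K N xs c x = (\<Sum>k\<in>K. phi_check d N xs c k * cnj (omega d k x))"

definition lattice_pt :: "nat \<Rightarrow> nat \<Rightarrow> (nat \<Rightarrow> nat) \<Rightarrow> nat \<Rightarrow> (nat \<Rightarrow> real)" where
  "lattice_pt d L gen l = restrict (\<lambda>j. frac (real l * real (gen j) / real L)) {..<d}"

definition lattice_rule :: "nat \<Rightarrow> nat \<Rightarrow> (nat \<Rightarrow> nat) \<Rightarrow> ((nat \<Rightarrow> real) \<Rightarrow> complex) \<Rightarrow> complex" where
  "lattice_rule d L gen f = (1 / of_nat L) * (\<Sum>l<L. f (lattice_pt d L gen l))"

definition err1 :: "nat \<Rightarrow> (nat \<Rightarrow> int) set \<Rightarrow> ((nat \<Rightarrow> real) \<Rightarrow> complex) \<Rightarrow> nat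
    \<Rightarrow> (nat \<Rightarrow> nat \<Rightarrow> real) \<Rightarrow> (nat \<Rightarrow> real) \<Rightarrow> real" where
  "err1 d K g N xs c = cmod ((1 / of_nat N) * (\<Sum>n<N. complex_of_real (c n) * g (xs n))
      - integral\<^sup>L (cube_measure d) (\<lambda>x. g x * phi_K d K N xs c x))"

definition err2 :: "nat \<Rightarrow> (nat \<Rightarrow> int) set \<Rightarrow> ((nat \<Rightarrow> real) \<Rightarrow> complex) \<Rightarrow> nat
    \<Rightarrow> (nat \<Rightarrow> nat \<Rightarrow> real) \<Rightarrow> (nat \<Rightarrow> real) \<Rightarrow> nat \<Rightarrow> (nat \<Rightarrow> nat) \<Rightarrow> real" where
  "err2 d K g N xs c L gen = cmod (integral\<^sup>L (cube_measure d) (\<lambda>x. g x * phi_K d K N xs c x)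
      - lattice_rule d L gen (\<lambda>x. g x * phi_K d K N xs c x))"

definition wce :: "real \<Rightarrow> (nat \<Rightarrow> real) \<Rightarrow> nat \<Rightarrow> nat \<Rightarrow> (nat \<Rightarrow> nat) \<Rightarrow> real" where
  "wce \<beta> \<gamma> d L gen = Sup {cmod (integral\<^sup>L (cube_measure d) f - lattice_rule d L gen f) | f.
      f \<in> korobov \<beta> \<gamma> d \<and> korobov_norm \<beta> \<gamma> d f \<le> 1}"

definition Cgd :: "(nat \<Rightarrow> real) \<Rightarrow> nat \<Rightarrow> real \<Rightarrow> real \<Rightarrow> real" where
  "Cgd \<gamma> d \<beta> \<tau> = 2 powr (\<beta> - \<tau>) *
     (\<Prod>j<d. (1 + 2 * \<gamma> j powr (1 / (2 * (\<beta> - \<tau>))) * rzeta (\<beta> / (\<beta> - \<tau>))) powr (\<beta> - \<tau>))"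

definition mu_bar :: "nat \<Rightarrow> (nat \<Rightarrow> real) \<Rightarrow> real" where
  "mu_bar N c = (1 / real N) * (\<Sum>n<N. \<bar>c n\<bar>)"

definition c_agd :: "real \<Rightarrow> (nat \<Rightarrow> real) \<Rightarrow> nat \<Rightarrow> real" where
  "c_agd \<alpha> \<gamma> d = sqrt (\<Prod>j<d. max 1 (2 powr (2 * \<alpha>) * \<gamma> j))"

definition zeta_dd :: "real \<Rightarrow> nat \<Rightarrow> real" where
  "zeta_dd \<delta> d = (1 + 2 * rzeta (1 + 2 * \<delta>)) powr (real d / 2)"

end

theory Submission
  imports Defs
begin

text \<open>
  The first error is the average, over the sample points, of the truncation error of the Fourier
  series of \<open>g\<close> to the frequency box \<open>Rset \<alpha> \<nu> \<gamma> d\<close>. By Cauchy-Schwarz against the weights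
  \<open>rw \<alpha>\<close> this error is at most \<open>\<parallel>g\<parallel>\<close> times the square root of the sum of \<open>1 / rw \<alpha>\<close> outside the
  box, which is \<open>O(\<nu> powr (1 / (2 * \<alpha>) - 1))\<close> because some coordinate of an outside frequency is large.

  The second error is the lattice-rule error for \<open>h = g * phi_K\<close>, hence at most the norm of \<open>h\<close> in the
  Korobov space of smoothness \<open>\<beta> = \<alpha> - 1/2 - \<delta>\<close> times the worst-case error there. The weights are
  quasi-submultiplicative, \<open>r(a + b) \<le> 2 powr (2 * \<beta>) * r(a) * r(b)\<close>, so multiplication by the
  trigonometric polynomial \<open>phi_K\<close> (coefficients bounded by \<open>mu_bar N c\<close>) maps the space of smoothness
  \<open>\<alpha>\<close> into that of smoothness \<open>\<beta>\<close>, with operator norm at most \<open>mu_bar N c\<close> times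
  \<open>sqrt (card K * (\<Sum>k\<in>K. rw \<beta> k))\<close>; on the box this is \<open>O(\<nu> powr ((1/2 + 1 / (4 * \<alpha>)) * d))\<close>.
\<close>

lemma has_sum_norm_le:
  fixes f :: "'a \<Rightarrow> 'b::real_normed_vector"
  assumes "(f has_sum s) A" and "\<And>F. finite F \<Longrightarrow> F \<subseteq> A \<Longrightarrow> (\<Sum>k\<in>F. norm (f k)) \<le> B"
  shows "norm s \<le> B"
proof -
  have "((\<lambda>F. norm (sum f F)) \<longlongrightarrow> norm s) (finite_subsets_at_top A)"
    using assms(1) unfolding has_sum_def by (rule tendsto_norm)
  moreover have "eventually (\<lambda>F. norm (sum f F) \<le> B) (finite_subsets_at_top A)"
    by (rule eventually_finite_subsets_at_top_weakI) (use assms(2) norm_sum order_trans in blast)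
  ultimately show ?thesis
    using finite_subsets_at_top_neq_bot tendsto_upperbound by blast
qed

lemma has_sum_sum:
  fixes f :: "'i \<Rightarrow> 'a \<Rightarrow> 'b::topological_comm_monoid_add"
  assumes "finite I" and "\<And>i. i \<in> I \<Longrightarrow> (f i has_sum s i) A"
  shows "((\<lambda>x. \<Sum>i\<in>I. f i x) has_sum (\<Sum>i\<in>I. s i)) A"
  using assms by (induction I rule: finite_induct) (simp_all add: has_sum_add)

lemma Cauchy_Schwarz_ineq_sum_weighted:
  fixes y p :: "'a \<Rightarrow> real"
  assumes "\<And>k. k \<in> K \<Longrightarrow> p k > 0"
  shows "(\<Sum>k\<in>K. y k)\<^sup>2 \<le> (\<Sum>k\<in>K. p k) * (\<Sum>k\<in>K. (y k)\<^sup>2 / p k)"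
proof -
  have "(\<Sum>k\<in>K. y k) = (\<Sum>k\<in>K. sqrt (p k) * (y k / sqrt (p k)))"
  proof (intro sum.cong refl)
    fix k assume "k \<in> K"
    then have "0 < sqrt (p k)" using assms by simp
    then show "y k = sqrt (p k) * (y k / sqrt (p k))" by simp
  qed
  also have "(\<dots>)\<^sup>2 \<le> (\<Sum>k\<in>K. (sqrt (p k))\<^sup>2) * (\<Sum>k\<in>K. (y k / sqrt (p k))\<^sup>2)"
    by (rule Cauchy_Schwarz_ineq_sum)
  also have "\<dots> = (\<Sum>k\<in>K. p k) * (\<Sum>k\<in>K. (y k)\<^sup>2 / p k)"
    using assms by (intro arg_cong2[where f = times] sum.cong) (auto simp: power_divide less_imp_le)
  finally show ?thesis .
qed

subsection \<open>Tails of p-series\<close>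

lemma powr_neg_le_diff_powr:
  fixes p x :: real
  assumes p: "p > 1" and x: "x > 1"
  shows "x powr (-p) \<le> ((x - 1) powr (1 - p) - x powr (1 - p)) / (p - 1)"
proof -
  have "((\<lambda>y. y powr (1 - p)) has_real_derivative (1 - p) * y powr (1 - p - 1)) (at y)"
    if "x - 1 \<le> y" for y
    using that x by (intro has_real_derivative_powr) auto
  then obtain z where z: "x - 1 < z" "z < x"
    and eq: "x powr (1 - p) - (x - 1) powr (1 - p) = (x - (x - 1)) * ((1 - p) * z powr (1 - p - 1))"
    using MVT2[of "x - 1" x "\<lambda>y. y powr (1 - p)" "\<lambda>y. (1 - p) * y powr (1 - p - 1)"] by auto
  have "x powr (-p) \<le> z powr (-p)"
    using z x p by (intro powr_mono2') auto
  moreover have "(x - 1) powr (1 - p) - x powr (1 - p) = (p - 1) * z powr (-p)"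
    using eq by (simp add: algebra_simps)
  ultimately show ?thesis
    using p by (simp add: pos_le_divide_eq mult.commute)
qed

lemma sum_powr_neg_atLeastAtMost_le:
  fixes p :: real
  assumes p: "p > 1" and M: "1 \<le> M" and N: "M \<le> N"
  shows "(\<Sum>n=M..N. real n powr (-p)) \<le> p / (p - 1) * real M powr (1 - p) - real N powr (1 - p) / (p - 1)"
  using N
proof (induction N rule: dec_induct)
  case base
  have "real M powr (-p) \<le> real M powr (1 - p)"
    using M by (intro powr_mono) auto
  also have "\<dots> = p / (p - 1) * real M powr (1 - p) - real M powr (1 - p) / (p - 1)"
    using p by (simp add: divide_simps) (simp add: algebra_simps)
  finally show ?case by simp
next
  case (step n)
  have "real (Suc n) powr (-p) \<le> (real n powr (1 - p) - real (Suc n) powr (1 - p)) / (p - 1)"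
    using powr_neg_le_diff_powr[OF p, of "real (Suc n)"] step M by simp
  then show ?case
    using step.IH step.hyps by (simp add: diff_divide_distrib)
qed

lemma sum_powr_neg_nat_le:
  fixes p :: real
  assumes p: "p > 1" and M: "1 \<le> M" and Q: "finite Q" "\<forall>n\<in>Q. M \<le> n"
  shows "(\<Sum>n\<in>Q. real n powr (-p)) \<le> p / (p - 1) * real M powr (1 - p)"
proof (cases "Q = {}")
  case True
  then show ?thesis using p by simp
next
  case False
  have "(\<Sum>n\<in>Q. real n powr (-p)) \<le> (\<Sum>n=M..Max Q. real n powr (-p))"
    using Q by (intro sum_mono2) auto
  also have "\<dots> \<le> p / (p - 1) * real M powr (1 - p) - real (Max Q) powr (1 - p) / (p - 1)"
    using False Q by (intro sum_powr_neg_atLeastAtMost_le[OF p M]) auto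
  also have "\<dots> \<le> p / (p - 1) * real M powr (1 - p)"
    using p by simp
  finally show ?thesis .
qed

lemma sum_abs_powr_neg_int_le:
  fixes p :: real
  assumes p: "p > 1" and M: "1 \<le> M" and P: "finite P" "\<forall>h\<in>P. int M \<le> \<bar>h\<bar>"
  shows "(\<Sum>h\<in>P. real_of_int \<bar>h\<bar> powr (-p)) \<le> 2 * (p / (p - 1) * real M powr (1 - p))"
proof -
  let ?f = "\<lambda>h. real_of_int \<bar>h\<bar> powr (-p)"
  have half: "(\<Sum>h\<in>Q. ?f h) \<le> p / (p - 1) * real M powr (1 - p)"
    if Q: "Q \<subseteq> P" "inj_on (\<lambda>h. nat \<bar>h\<bar>) Q" for Q
  proof -
    have "(\<Sum>h\<in>Q. ?f h) = (\<Sum>n\<in>(\<lambda>h. nat \<bar>h\<bar>) ` Q. real n powr (-p))"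
      by (simp add: sum.reindex[OF Q(2)])
    also have "\<dots> \<le> p / (p - 1) * real M powr (1 - p)"
      using Q(1) P by (intro sum_powr_neg_nat_le[OF p M]) (auto simp: le_nat_iff intro: finite_subset)
    finally show ?thesis .
  qed
  have "P = {h\<in>P. h > 0} \<union> {h\<in>P. h < 0}"
    using P M by force
  then have "(\<Sum>h\<in>P. ?f h) = (\<Sum>h\<in>{h\<in>P. h > 0}. ?f h) + (\<Sum>h\<in>{h\<in>P. h < 0}. ?f h)"
    using P by (metis (no_types, lifting) sum.union_disjoint finite_Un disjoint_iff mem_Collect_eq not_less_iff_gr_or_eq)
  also have "\<dots> \<le> p / (p - 1) * real M powr (1 - p) + p / (p - 1) * real M powr (1 - p)"
    by (intro add_mono half) (auto simp: inj_on_def)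
  finally show ?thesis
    by (simp only: mult_2)
qed

subsection \<open>Characters\<close>

lemma prob_space_cube_measure: "prob_space (cube_measure d)"
  unfolding cube_measure_def
  by (intro prob_space_PiM prob_space_restrict_space) auto

lemma measurable_omega: "omega d k \<in> borel_measurable (cube_measure d)"
proof -
  have "(\<lambda>x. x j) \<in> borel_measurable (cube_measure d)" if "j < d" for j
  proof -
    have "(\<lambda>x. x j) \<in> measurable (cube_measure d) (restrict_space lborel {0..1::real})"
      unfolding cube_measure_def using that by (intro measurable_component_singleton) auto
    moreover have "(\<lambda>x. x) \<in> measurable (restrict_space lborel {0..1::real}) borel"
      by (intro measurable_restrict_space1) simp
    ultimately show ?thesis
      using measurable_comp by (simp add: comp_def)
  qed
  then have "(\<lambda>x. 2 * pi * (\<Sum>j<d. real_of_int (k j) * x j)) \<in> borel_measurable (cube_measure d)"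
    by (intro borel_measurable_times borel_measurable_sum borel_measurable_const) auto
  then show ?thesis
    unfolding omega_def by (rule borel_measurable_continuous_on[OF continuous_on_cis[OF continuous_on_id]])
qed

lemma norm_omega [simp]: "norm (omega d k x) = 1"
  unfolding omega_def by simp

lemma omega_zero [simp]: "omega d (\<lambda>_. 0) x = 1"
  unfolding omega_def by simp

lemma cnj_omega: "cnj (omega d k x) = omega d (\<lambda>i. - k i) x"
  unfolding omega_def by (simp add: cis_cnj sum_negf)

lemma omega_mult: "omega d j x * omega d k x = omega d (\<lambda>i. j i + k i) x"
  unfolding omega_def by (simp add: cis_mult sum.distrib algebra_simps)

lemma omega_mult_cnj: "omega d j x * cnj (omega d k x) = omega d (\<lambda>i. j i - k i) x"
  by (simp add: cnj_omega omega_mult)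

lemma cnj_omega_mult_cnj: "cnj (omega d k x) * cnj (omega d m x) = cnj (omega d (\<lambda>i. m i + k i) x)"
  by (simp add: cnj_omega omega_mult add.commute)

lemma measurable_phi_K: "phi_K d K N xs c \<in> borel_measurable (cube_measure d)"
  unfolding phi_K_def[abs_def] cnj_omega
  by (intro borel_measurable_sum borel_measurable_times borel_measurable_const measurable_omega)

lemma norm_phi_K_le: "norm (phi_K d K N xs c x) \<le> (\<Sum>k\<in>K. norm (phi_check d N xs c k))"
  unfolding phi_K_def by (rule order_trans[OF norm_sum]) (simp add: norm_mult)

lemma mu_bar_nonneg: "0 \<le> mu_bar N c"
  unfolding mu_bar_def by (auto intro: sum_nonneg)

lemma norm_phi_check_le: "norm (phi_check d N xs c k) \<le> mu_bar N c"
proof -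
  have "norm (phi_check d N xs c k) = (1 / real N) * norm (\<Sum>n<N. complex_of_real (c n) * omega d k (xs n))"
    unfolding phi_check_def by (simp add: norm_mult norm_divide)
  also have "\<dots> \<le> (1 / real N) * (\<Sum>n<N. \<bar>c n\<bar>)"
    by (intro mult_left_mono order_trans[OF norm_sum] sum_mono) (auto simp: norm_mult)
  finally show ?thesis unfolding mu_bar_def .
qed

subsection \<open>The weights\<close>

lemma r1_ge_1: "1 \<le> r1 s \<gamma> h"
  unfolding r1_def by simp

lemma r1_0 [simp]: "r1 s \<gamma> 0 = 1"
  unfolding r1_def by simp

lemma r1_minus [simp]: "r1 s \<gamma> (- h) = r1 s \<gamma> h"
  unfolding r1_def by simp

lemma r1_mono:
  assumes "\<beta> \<le> \<alpha>" and "0 < \<gamma>"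
  shows "r1 \<beta> \<gamma> h \<le> r1 \<alpha> \<gamma> h"
proof -
  have "real_of_int \<bar>h\<bar> powr (2 * \<beta>) \<le> real_of_int \<bar>h\<bar> powr (2 * \<alpha>)"
  proof (cases "h = 0")
    case False
    then have "1 \<le> real_of_int \<bar>h\<bar>" by linarith
    then show ?thesis using assms by (intro powr_mono) auto
  qed simp
  then show ?thesis
    unfolding r1_def using assms by (intro max.mono divide_right_mono) auto
qed

lemma r1_add_le:
  assumes "0 \<le> \<beta>" and "0 < \<gamma>"
  shows "r1 \<beta> \<gamma> (a + b) \<le> 2 powr (2 * \<beta>) * r1 \<beta> \<gamma> a * r1 \<beta> \<gamma> b"
proof -
  have le_larger: "real_of_int \<bar>a + b\<bar> powr (2 * \<beta>) / \<gamma> \<le> 2 powr (2 * \<beta>) * r1 \<beta> \<gamma> a * r1 \<beta> \<gamma> b"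
    if "\<bar>a\<bar> \<le> \<bar>b\<bar>" for a b :: int
  proof -
    have "real_of_int \<bar>a + b\<bar> powr (2 * \<beta>) \<le> (2 * real_of_int \<bar>b\<bar>) powr (2 * \<beta>)"
      using that assms by (intro powr_mono2) auto
    then have "real_of_int \<bar>a + b\<bar> powr (2 * \<beta>) / \<gamma> \<le> 2 powr (2 * \<beta>) * (real_of_int \<bar>b\<bar> powr (2 * \<beta>) / \<gamma>)"
      using assms by (simp add: powr_mult divide_right_mono)
    also have "\<dots> \<le> 2 powr (2 * \<beta>) * r1 \<beta> \<gamma> b"
      unfolding r1_def by (intro mult_left_mono) auto
    also have "\<dots> \<le> 2 powr (2 * \<beta>) * r1 \<beta> \<gamma> a * r1 \<beta> \<gamma> b"
      using r1_ge_1[of \<beta> \<gamma> a] r1_ge_1[of \<beta> \<gamma> b] by (simp add: mult_le_cancel_left1 mult.assoc)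
    finally show ?thesis .
  qed
  have "real_of_int \<bar>a + b\<bar> powr (2 * \<beta>) / \<gamma> \<le> 2 powr (2 * \<beta>) * r1 \<beta> \<gamma> a * r1 \<beta> \<gamma> b"
  proof (cases "\<bar>a\<bar> \<le> \<bar>b\<bar>")
    case False
    then show ?thesis
      using le_larger[of b a] by (simp add: add.commute mult_ac)
  qed (rule le_larger)
  moreover have "1 * (1 * 1) \<le> 2 powr (2 * \<beta>) * (r1 \<beta> \<gamma> a * r1 \<beta> \<gamma> b)"
    using r1_ge_1[of \<beta> \<gamma> a] r1_ge_1[of \<beta> \<gamma> b] assms
    by (intro mult_mono ge_one_powr_ge_zero) auto
  ultimately show ?thesis
    unfolding r1_def[of \<beta> \<gamma> "a + b"] by (simp add: mult.assoc)
qed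

lemma inverse_r1_le:
  assumes "h \<noteq> 0" and "0 < \<gamma>"
  shows "1 / r1 s \<gamma> h \<le> \<gamma> * real_of_int \<bar>h\<bar> powr (- (2 * s))"
proof -
  have "1 / r1 s \<gamma> h \<le> 1 / (real_of_int \<bar>h\<bar> powr (2 * s) / \<gamma>)"
    using assms unfolding r1_def by (intro frac_le) auto
  also have "\<dots> = \<gamma> * real_of_int \<bar>h\<bar> powr (- (2 * s))"
    using assms by (simp add: powr_minus_divide)
  finally show ?thesis .
qed

lemma abs_powr_le_of_r1_le:
  assumes "0 < \<gamma>" "\<gamma> \<le> 1" "0 \<le> \<nu>" and "r1 s \<gamma> h \<le> \<nu>"
  shows "real_of_int \<bar>h\<bar> powr (2 * s) \<le> \<nu>"
proof -
  have "real_of_int \<bar>h\<bar> powr (2 * s) \<le> \<nu> * \<gamma>"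
    using assms unfolding r1_def by (simp add: divide_le_eq)
  also have "\<dots> \<le> \<nu>"
    using assms by (intro mult_left_le) auto
  finally show ?thesis .
qed

text \<open>An upper bound for \<open>1 + 2 \<zeta>(2 s)\<close>, the sum of \<open>1 / r1 s \<gamma> h\<close> over all \<open>h\<close> when \<open>\<gamma> \<le> 1\<close>.\<close>

definition sum_inv_r1_bound :: "real \<Rightarrow> real" where
  "sum_inv_r1_bound s = 1 + 2 * (2 * s / (2 * s - 1))"

lemma sum_inv_r1_bound_ge_1: "1 / 2 < s \<Longrightarrow> 1 \<le> sum_inv_r1_bound s"
  unfolding sum_inv_r1_bound_def by simp

lemma sum_inverse_r1_le:
  assumes s: "1 / 2 < s" and \<gamma>: "0 < \<gamma>" "\<gamma> \<le> 1" and P: "finite P"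
  shows "(\<Sum>h\<in>P. 1 / r1 s \<gamma> h) \<le> sum_inv_r1_bound s"
proof -
  have "(\<Sum>h\<in>P. 1 / r1 s \<gamma> h) = (\<Sum>h\<in>P \<inter> {0}. 1 / r1 s \<gamma> h) + (\<Sum>h\<in>P - {0}. 1 / r1 s \<gamma> h)"
    using P by (metis Diff_eq sum.Int_Diff)
  also have "(\<Sum>h\<in>P \<inter> {0}. 1 / r1 s \<gamma> h) \<le> 1"
    by (cases "0 \<in> P") (auto simp: Int_insert_right)
  also have "(\<Sum>h\<in>P - {0}. 1 / r1 s \<gamma> h) \<le> (\<Sum>h\<in>P - {0}. real_of_int \<bar>h\<bar> powr (- (2 * s)))"
  proof (rule sum_mono)
    fix h assume "h \<in> P - {0}"
    then have "1 / r1 s \<gamma> h \<le> \<gamma> * real_of_int \<bar>h\<bar> powr (- (2 * s))"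
      using \<gamma> by (intro inverse_r1_le) auto
    also have "\<dots> \<le> real_of_int \<bar>h\<bar> powr (- (2 * s))"
      using \<gamma> by (intro mult_left_le_one_le) auto
    finally show "1 / r1 s \<gamma> h \<le> real_of_int \<bar>h\<bar> powr (- (2 * s))" .
  qed
  also have "\<dots> \<le> 2 * (2 * s / (2 * s - 1) * real (1::nat) powr (1 - 2 * s))"
    using s P by (intro sum_abs_powr_neg_int_le) auto
  finally show ?thesis
    unfolding sum_inv_r1_bound_def by simp
qed

lemma sum_inverse_r1_tail_le:
  assumes \<alpha>: "1 / 2 < \<alpha>" and \<gamma>: "0 < \<gamma>" "\<gamma> \<le> 1" and \<nu>: "1 < \<nu>" and P: "finite P"
    and tail: "\<forall>h\<in>P. \<nu> < r1 \<alpha> \<gamma> h"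
  shows "(\<Sum>h\<in>P. 1 / r1 \<alpha> \<gamma> h) \<le> 2 * (2 * \<alpha> / (2 * \<alpha> - 1)) * \<nu> powr (1 / (2 * \<alpha>) - 1)"
proof -
  define p where "p = 2 * \<alpha>"
  have p: "1 < p" using \<alpha> unfolding p_def by simp
  define t where "t = (\<nu> * \<gamma>) powr (1 / p)"
  have t: "0 < t" using \<nu> \<gamma> unfolding t_def by simp
  define M where "M = nat \<lfloor>t\<rfloor> + 1"
  have M: "1 \<le> M" "t \<le> real M"
    unfolding M_def using t by linarith+
  have P_large: "int M \<le> \<bar>h\<bar>" if "h \<in> P" for h
  proof -
    have "\<nu> < real_of_int \<bar>h\<bar> powr p / \<gamma>"
      using tail that \<nu> unfolding r1_def p_def by (auto simp: less_max_iff_disj)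
    then have "\<nu> * \<gamma> < real_of_int \<bar>h\<bar> powr p"
      using \<gamma> by (simp add: pos_less_divide_eq)
    then have "t < (real_of_int \<bar>h\<bar> powr p) powr (1 / p)"
      unfolding t_def using p \<nu> \<gamma> by (intro powr_less_mono2) auto
    then have "t < real_of_int \<bar>h\<bar>"
      using p by (simp add: powr_powr)
    then show ?thesis
      unfolding M_def using t by linarith
  qed
  have P_nonzero: "h \<noteq> 0" if "h \<in> P" for h
    using P_large[OF that] M by linarith
  have \<gamma>_t: "\<gamma> * t powr (1 - p) \<le> \<nu> powr (1 / p - 1)"
  proof -
    have "\<gamma> * t powr (1 - p) = \<nu> powr ((1 - p) / p) * (\<gamma> * \<gamma> powr ((1 - p) / p))"
      unfolding t_def by (simp add: powr_powr powr_mult)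
    also have "\<dots> = \<nu> powr (1 / p - 1) * \<gamma> powr (1 / p)"
      using \<gamma> p by (simp add: powr_mult_base diff_divide_distrib)
    also have "\<dots> \<le> \<nu> powr (1 / p - 1)"
      using \<gamma> powr_le1[of "1 / p" \<gamma>] p by (intro mult_right_le_one_le) auto
    finally show ?thesis .
  qed
  have "(\<Sum>h\<in>P. 1 / r1 \<alpha> \<gamma> h) \<le> (\<Sum>h\<in>P. \<gamma> * real_of_int \<bar>h\<bar> powr (-p))"
    using P_nonzero \<gamma> unfolding p_def by (intro sum_mono inverse_r1_le) auto
  also have "\<dots> = \<gamma> * (\<Sum>h\<in>P. real_of_int \<bar>h\<bar> powr (-p))"
    by (simp add: sum_distrib_left)
  also have "\<dots> \<le> \<gamma> * (2 * (p / (p - 1) * real M powr (1 - p)))"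
    using \<gamma> P P_large by (intro mult_left_mono sum_abs_powr_neg_int_le[OF p M(1)]) auto
  also have "\<dots> \<le> \<gamma> * (2 * (p / (p - 1) * t powr (1 - p)))"
    using \<gamma> p t M by (intro mult_left_mono powr_mono2') auto
  also have "\<dots> = 2 * (p / (p - 1)) * (\<gamma> * t powr (1 - p))"
    by simp
  also have "\<dots> \<le> 2 * (p / (p - 1)) * \<nu> powr (1 / p - 1)"
    using p \<gamma>_t by (intro mult_left_mono) auto
  finally show ?thesis
    unfolding p_def .
qed

lemma rw_ge_1: "1 \<le> rw s \<gamma> d k"
  unfolding rw_def using r1_ge_1 by (intro prod_ge_1) auto

lemma inverse_rw: "1 / rw s \<gamma> d k = (\<Prod>i<d. 1 / r1 s (\<gamma> i) (k i))"
  unfolding rw_def by (simp add: prod_dividef)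

lemma rw_mono:
  assumes "\<beta> \<le> \<alpha>" and "\<forall>j<d. 0 < \<gamma> j"
  shows "rw \<beta> \<gamma> d k \<le> rw \<alpha> \<gamma> d k"
  unfolding rw_def using assms
  by (intro prod_mono) (auto intro: r1_mono order_trans[OF zero_le_one r1_ge_1])

lemma rw_le_shift:
  assumes "0 \<le> \<beta>" and "\<forall>j<d. 0 < \<gamma> j"
  shows "rw \<beta> \<gamma> d m \<le> (2 powr (2 * \<beta>)) ^ d * rw \<beta> \<gamma> d (\<lambda>i. m i + k i) * rw \<beta> \<gamma> d k"
proof -
  have "rw \<beta> \<gamma> d m \<le> (\<Prod>i<d. 2 powr (2 * \<beta>) * r1 \<beta> (\<gamma> i) (m i + k i) * r1 \<beta> (\<gamma> i) (k i))"
    unfolding rw_def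
  proof (intro prod_mono conjI)
    fix i assume "i \<in> {..<d}"
    then show "r1 \<beta> (\<gamma> i) (m i) \<le> 2 powr (2 * \<beta>) * r1 \<beta> (\<gamma> i) (m i + k i) * r1 \<beta> (\<gamma> i) (k i)"
      using r1_add_le[of \<beta> "\<gamma> i" "m i + k i" "- k i"] assms by simp
  qed (rule order_trans[OF zero_le_one r1_ge_1])
  also have "\<dots> = (2 powr (2 * \<beta>)) ^ d * rw \<beta> \<gamma> d (\<lambda>i. m i + k i) * rw \<beta> \<gamma> d k"
    unfolding rw_def by (simp add: prod.distrib)
  finally show ?thesis .
qed

subsection \<open>Boxes of frequencies\<close>

definition ZPi :: "nat \<Rightarrow> (nat \<Rightarrow> int set) \<Rightarrow> (nat \<Rightarrow> int) set" where
  "ZPi d P = {k. (\<forall>i<d. k i \<in> P i) \<and> (\<forall>i\<ge>d. k i = 0)}"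

lemma bij_betw_restrict_ZPi: "bij_betw (\<lambda>k. restrict k {..<d}) (ZPi d P) (PiE {..<d} P)"
proof (rule bij_betw_byWitness[where f' = "\<lambda>p i. if i < d then p i else 0"])
  show "\<forall>k\<in>ZPi d P. (\<lambda>i. if i < d then restrict k {..<d} i else 0) = k"
    unfolding ZPi_def by (auto simp: fun_eq_iff)
  show "\<forall>p\<in>PiE {..<d} P. restrict (\<lambda>i. if i < d then p i else 0) {..<d} = p"
  proof
    fix p assume p: "p \<in> PiE {..<d} P"
    show "restrict (\<lambda>i. if i < d then p i else 0) {..<d} = p"
      using PiE_arb[OF p] by (auto simp: fun_eq_iff)
  qed
  show "(\<lambda>k. restrict k {..<d}) ` ZPi d P \<subseteq> PiE {..<d} P"
  proof
    fix x assume "x \<in> (\<lambda>k. restrict k {..<d}) ` ZPi d P"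
    then obtain k where k: "k \<in> ZPi d P" and x: "x = restrict k {..<d}" by auto
    show "x \<in> PiE {..<d} P"
      unfolding x by (rule restrict_PiE_iff[THEN iffD2]) (use k in \<open>auto simp: ZPi_def\<close>)
  qed
  show "(\<lambda>p i. if i < d then p i else 0) ` PiE {..<d} P \<subseteq> ZPi d P"
  proof
    fix x assume "x \<in> (\<lambda>p i. if i < d then p i else 0) ` PiE {..<d} P"
    then obtain p where p: "p \<in> PiE {..<d} P" and x: "x = (\<lambda>i. if i < d then p i else 0)" by auto
    show "x \<in> ZPi d P"
      unfolding ZPi_def x using PiE_mem[OF p] by simp
  qed
qed

lemma finite_ZPi: "(\<And>i. i < d \<Longrightarrow> finite (P i)) \<Longrightarrow> finite (ZPi d P)"
  using bij_betw_finite[OF bij_betw_restrict_ZPi] by (auto intro!: finite_PiE)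

lemma card_ZPi: "(\<And>i. i < d \<Longrightarrow> finite (P i)) \<Longrightarrow> card (ZPi d P) = (\<Prod>i<d. card (P i))"
  using bij_betw_same_card[OF bij_betw_restrict_ZPi] by (simp add: card_PiE)

lemma sum_prod_ZPi:
  fixes w :: "nat \<Rightarrow> int \<Rightarrow> real"
  assumes "\<And>i. i < d \<Longrightarrow> finite (P i)"
  shows "(\<Sum>k\<in>ZPi d P. \<Prod>i<d. w i (k i)) = (\<Prod>i<d. \<Sum>h\<in>P i. w i h)"
proof -
  have "(\<Prod>i<d. \<Sum>h\<in>P i. w i h) = (\<Sum>p\<in>PiE {..<d} P. \<Prod>i<d. w i (p i))"
    using assms by (intro prod_sum_PiE) auto
  also have "\<dots> = (\<Sum>k\<in>ZPi d P. \<Prod>i<d. w i (restrict k {..<d} i))"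
    by (rule sum.reindex_bij_betw[OF bij_betw_restrict_ZPi, symmetric])
  also have "\<dots> = (\<Sum>k\<in>ZPi d P. \<Prod>i<d. w i (k i))"
    by (intro sum.cong prod.cong) auto
  finally show ?thesis by simp
qed

text \<open>A finite set of frequencies lies in the box spanned by its coordinate projections.\<close>

lemma sum_prod_le_prod_sum_proj:
  fixes w :: "nat \<Rightarrow> int \<Rightarrow> real"
  assumes F: "finite F" "F \<subseteq> Zd d" and w: "\<And>i h. 0 \<le> w i h"
  shows "(\<Sum>k\<in>F. \<Prod>i<d. w i (k i)) \<le> (\<Prod>i<d. \<Sum>h\<in>(\<lambda>k. k i) ` F. w i h)"
proof -
  have "F \<subseteq> ZPi d (\<lambda>i. (\<lambda>k. k i) ` F)"
    using F(2) unfolding ZPi_def Zd_def by auto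
  then have "(\<Sum>k\<in>F. \<Prod>i<d. w i (k i)) \<le> (\<Sum>k\<in>ZPi d (\<lambda>i. (\<lambda>k. k i) ` F). \<Prod>i<d. w i (k i))"
    using F w by (intro sum_mono2 finite_ZPi prod_nonneg) auto
  also have "\<dots> = (\<Prod>i<d. \<Sum>h\<in>(\<lambda>k. k i) ` F. w i h)"
    using F by (intro sum_prod_ZPi) auto
  finally show ?thesis .
qed

lemma sum_inverse_rw_le:
  assumes s: "1 / 2 < s" and \<gamma>: "\<forall>j<d. 0 < \<gamma> j \<and> \<gamma> j \<le> 1" and F: "finite F" "F \<subseteq> Zd d"
  shows "(\<Sum>k\<in>F. 1 / rw s \<gamma> d k) \<le> sum_inv_r1_bound s ^ d"
proof -
  have "(\<Sum>k\<in>F. 1 / rw s \<gamma> d k) \<le> (\<Prod>i<d. \<Sum>h\<in>(\<lambda>k. k i) ` F. 1 / r1 s (\<gamma> i) h)"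
    unfolding inverse_rw using F by (intro sum_prod_le_prod_sum_proj) (auto intro: order_trans[OF zero_le_one r1_ge_1])
  also have "\<dots> \<le> (\<Prod>i<d. sum_inv_r1_bound s)"
    using F s \<gamma> by (intro prod_mono conjI sum_nonneg sum_inverse_r1_le) (auto intro: order_trans[OF zero_le_one r1_ge_1])
  finally show ?thesis by simp
qed

lemma sum_inverse_rw_coordinate_tail_le:
  assumes \<alpha>: "1 / 2 < \<alpha>" and \<gamma>: "\<forall>j<d. 0 < \<gamma> j \<and> \<gamma> j \<le> 1" and \<nu>: "1 < \<nu>"
    and F: "finite F" "F \<subseteq> Zd d" and j: "j < d" and tail: "\<forall>k\<in>F. \<nu> < r1 \<alpha> (\<gamma> j) (k j)"
  shows "(\<Sum>k\<in>F. 1 / rw \<alpha> \<gamma> d k)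
    \<le> sum_inv_r1_bound \<alpha> ^ d * (2 * (2 * \<alpha> / (2 * \<alpha> - 1)) * \<nu> powr (1 / (2 * \<alpha>) - 1))"
  (is "_ \<le> ?S ^ d * ?T")
proof -
  define a where "a i = (\<Sum>h\<in>(\<lambda>k. k i) ` F. 1 / r1 \<alpha> (\<gamma> i) h)" for i
  have nonneg: "0 \<le> 1 / r1 \<alpha> (\<gamma> i) h" for i h
    using r1_ge_1[of \<alpha> "\<gamma> i" h] by simp
  have S: "1 \<le> ?S"
    using sum_inv_r1_bound_ge_1[OF \<alpha>] .
  have T: "0 \<le> ?T"
    using \<alpha> by (intro mult_nonneg_nonneg divide_nonneg_nonneg) auto
  have a_nonneg: "0 \<le> a i" for i
    unfolding a_def by (intro sum_nonneg nonneg)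
  have a_le_S: "a i \<le> ?S" if "i < d" for i
    unfolding a_def using \<alpha> \<gamma> that F by (intro sum_inverse_r1_le) auto
  have a_j: "a j \<le> ?T"
    unfolding a_def using \<alpha> \<gamma> \<nu> j F tail by (intro sum_inverse_r1_tail_le) auto
  have "(\<Sum>k\<in>F. 1 / rw \<alpha> \<gamma> d k) \<le> (\<Prod>i<d. a i)"
    unfolding inverse_rw a_def using F by (intro sum_prod_le_prod_sum_proj nonneg)
  also have "\<dots> = a j * (\<Prod>i\<in>{..<d} - {j}. a i)"
    using j by (intro prod.remove) auto
  also have "\<dots> \<le> ?T * (\<Prod>i\<in>{..<d} - {j}. ?S)"
    using a_j a_le_S a_nonneg T by (intro mult_mono prod_mono prod_nonneg) auto
  also have "\<dots> = ?T * ?S ^ (d - 1)"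
    using j by simp
  also have "\<dots> \<le> ?T * ?S ^ d"
    using S T by (intro mult_left_mono power_increasing) auto
  finally show ?thesis
    by (simp only: mult.commute)
qed

text \<open>Outside \<open>Rset\<close> some coordinate \<open>j\<close> has \<open>r1 > \<nu>\<close>; in that coordinate the tail bound replaces
  the full bound.\<close>

lemma sum_inverse_rw_outside_Rset_le:
  assumes \<alpha>: "1 / 2 < \<alpha>" and \<gamma>: "\<forall>j<d. 0 < \<gamma> j \<and> \<gamma> j \<le> 1" and \<nu>: "1 < \<nu>"
    and F: "finite F" "F \<subseteq> Zd d - Rset \<alpha> \<nu> \<gamma> d"
  shows "(\<Sum>k\<in>F. 1 / rw \<alpha> \<gamma> d k)
    \<le> real d * (sum_inv_r1_bound \<alpha> ^ d * (2 * (2 * \<alpha> / (2 * \<alpha> - 1)) * \<nu> powr (1 / (2 * \<alpha>) - 1)))"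
  (is "_ \<le> real d * (?S ^ d * ?T)")
proof -
  define F' where "F' j = {k \<in> F. \<nu> < r1 \<alpha> (\<gamma> j) (k j)}" for j
  define w where "w k j = (if \<nu> < r1 \<alpha> (\<gamma> j) (k j) then 1 / rw \<alpha> \<gamma> d k else 0)" for k j
  have "1 / rw \<alpha> \<gamma> d k \<le> (\<Sum>j<d. w k j)" if "k \<in> F" for k
  proof -
    have "k \<in> Zd d" "k \<notin> Rset \<alpha> \<nu> \<gamma> d"
      using that F by auto
    then obtain j where j: "j < d" "\<nu> < r1 \<alpha> (\<gamma> j) (k j)"
      unfolding Rset_def by (auto simp: not_le)
    then have "1 / rw \<alpha> \<gamma> d k = w k j"
      by (simp add: w_def)
    also have "\<dots> \<le> (\<Sum>j<d. w k j)"
      using j(1) rw_ge_1[of \<alpha> \<gamma> d k] by (intro member_le_sum) (auto simp: w_def)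
    finally show ?thesis .
  qed
  then have "(\<Sum>k\<in>F. 1 / rw \<alpha> \<gamma> d k) \<le> (\<Sum>k\<in>F. \<Sum>j<d. w k j)"
    by (rule sum_mono)
  also have "\<dots> = (\<Sum>j<d. \<Sum>k\<in>F' j. 1 / rw \<alpha> \<gamma> d k)"
    unfolding F'_def w_def using F(1) by (subst sum.swap) (simp add: sum.inter_filter)
  also have "\<dots> \<le> (\<Sum>j<d. ?S ^ d * ?T)"
    using \<alpha> \<gamma> \<nu> F by (intro sum_mono sum_inverse_rw_coordinate_tail_le) (auto simp: F'_def)
  also have "\<dots> = real d * (?S ^ d * ?T)"
    by simp
  finally show ?thesis .
qed

lemma Rset_subset_Zd: "Rset \<alpha> \<nu> \<gamma> d \<subseteq> Zd d"
  unfolding Rset_def by auto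

lemma Rset_subset_ZPi:
  assumes \<alpha>: "0 < \<alpha>" and \<gamma>: "\<forall>j<d. 0 < \<gamma> j \<and> \<gamma> j \<le> 1" and \<nu>: "1 < \<nu>"
  shows "Rset \<alpha> \<nu> \<gamma> d \<subseteq> ZPi d (\<lambda>_. {- \<lfloor>\<nu> powr (1 / (2 * \<alpha>))\<rfloor>..\<lfloor>\<nu> powr (1 / (2 * \<alpha>))\<rfloor>})"
proof
  fix k assume k: "k \<in> Rset \<alpha> \<nu> \<gamma> d"
  have "k j \<in> {- \<lfloor>\<nu> powr (1 / (2 * \<alpha>))\<rfloor>..\<lfloor>\<nu> powr (1 / (2 * \<alpha>))\<rfloor>}" if j: "j < d" for j
  proof -
    have "real_of_int \<bar>k j\<bar> powr (2 * \<alpha>) \<le> \<nu>"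
      using k j \<gamma> \<nu> unfolding Rset_def by (intro abs_powr_le_of_r1_le[of "\<gamma> j"]) auto
    then have "(real_of_int \<bar>k j\<bar> powr (2 * \<alpha>)) powr (1 / (2 * \<alpha>)) \<le> \<nu> powr (1 / (2 * \<alpha>))"
      using \<alpha> by (intro powr_mono2) auto
    then have "\<bar>k j\<bar> \<le> \<lfloor>\<nu> powr (1 / (2 * \<alpha>))\<rfloor>"
      using \<alpha> by (simp add: powr_powr le_floor_iff)
    then show ?thesis
      by (auto simp: abs_le_iff)
  qed
  then show "k \<in> ZPi d (\<lambda>_. {- \<lfloor>\<nu> powr (1 / (2 * \<alpha>))\<rfloor>..\<lfloor>\<nu> powr (1 / (2 * \<alpha>))\<rfloor>})"
    using k unfolding ZPi_def Rset_def Zd_def by auto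
qed

lemma finite_Rset:
  assumes "0 < \<alpha>" and "\<forall>j<d. 0 < \<gamma> j \<and> \<gamma> j \<le> 1" and "1 < \<nu>"
  shows "finite (Rset \<alpha> \<nu> \<gamma> d)"
  by (rule finite_subset[OF Rset_subset_ZPi[OF assms]]) (simp add: finite_ZPi)

lemma card_Rset_le:
  assumes \<alpha>: "0 < \<alpha>" and \<gamma>: "\<forall>j<d. 0 < \<gamma> j \<and> \<gamma> j \<le> 1" and \<nu>: "1 < \<nu>"
  shows "real (card (Rset \<alpha> \<nu> \<gamma> d)) \<le> (3 * \<nu> powr (1 / (2 * \<alpha>))) ^ d"
proof -
  let ?u = "\<nu> powr (1 / (2 * \<alpha>))"
  have u: "1 \<le> ?u"
    using \<alpha> \<nu> by (intro ge_one_powr_ge_zero) auto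
  have "card (Rset \<alpha> \<nu> \<gamma> d) \<le> card (ZPi d (\<lambda>_. {- \<lfloor>?u\<rfloor>..\<lfloor>?u\<rfloor>}))"
    by (intro card_mono Rset_subset_ZPi[OF assms] finite_ZPi) simp
  also have "\<dots> = nat (2 * \<lfloor>?u\<rfloor> + 1) ^ d"
    by (simp add: card_ZPi)
  finally have "real (card (Rset \<alpha> \<nu> \<gamma> d)) \<le> real (nat (2 * \<lfloor>?u\<rfloor> + 1) ^ d)"
    by linarith
  also have "\<dots> = real_of_int (2 * \<lfloor>?u\<rfloor> + 1) ^ d"
    using u by (simp add: of_nat_power)
  also have "\<dots> \<le> (3 * ?u) ^ d"
  proof (rule power_mono)
    have "real_of_int \<lfloor>?u\<rfloor> \<le> ?u" "1 \<le> real_of_int \<lfloor>?u\<rfloor>"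
      using u by (simp_all add: le_floor_iff)
    moreover have "real_of_int (2 * \<lfloor>?u\<rfloor> + 1) = 2 * real_of_int \<lfloor>?u\<rfloor> + 1"
      by simp
    ultimately show "0 \<le> real_of_int (2 * \<lfloor>?u\<rfloor> + 1)" "real_of_int (2 * \<lfloor>?u\<rfloor> + 1) \<le> 3 * ?u"
      by linarith+
  qed
  finally show ?thesis .
qed

lemma rw_le_on_Rset:
  assumes \<beta>: "0 < \<beta>" "\<beta> \<le> \<alpha>" and \<gamma>: "\<forall>j<d. 0 < \<gamma> j \<and> \<gamma> j \<le> 1" and \<nu>: "1 < \<nu>"
    and k: "k \<in> Rset \<alpha> \<nu> \<gamma> d"
  shows "rw \<beta> \<gamma> d k \<le> (\<nu> powr (\<beta> / \<alpha>)) ^ d / (\<Prod>j<d. \<gamma> j)"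
proof -
  have "r1 \<beta> (\<gamma> j) (k j) \<le> \<nu> powr (\<beta> / \<alpha>) / \<gamma> j" if j: "j < d" for j
  proof -
    have "real_of_int \<bar>k j\<bar> powr (2 * \<alpha>) \<le> \<nu>"
      using k j \<gamma> \<nu> unfolding Rset_def by (intro abs_powr_le_of_r1_le[of "\<gamma> j"]) auto
    then have "(real_of_int \<bar>k j\<bar> powr (2 * \<alpha>)) powr (\<beta> / \<alpha>) \<le> \<nu> powr (\<beta> / \<alpha>)"
      using \<beta> by (intro powr_mono2) auto
    then have "real_of_int \<bar>k j\<bar> powr (2 * \<beta>) \<le> \<nu> powr (\<beta> / \<alpha>)"
      using \<beta> by (simp add: powr_powr)
    then have "real_of_int \<bar>k j\<bar> powr (2 * \<beta>) / \<gamma> j \<le> \<nu> powr (\<beta> / \<alpha>) / \<gamma> j"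
      using \<gamma> j by (intro divide_right_mono) auto
    moreover have "1 \<le> \<nu> powr (\<beta> / \<alpha>) / \<gamma> j"
    proof -
      have "0 < \<gamma> j" "\<gamma> j \<le> 1" "1 \<le> \<nu> powr (\<beta> / \<alpha>)"
        using \<beta> \<gamma> \<nu> j by (auto intro: ge_one_powr_ge_zero)
      then show ?thesis
        by (simp add: pos_le_divide_eq)
    qed
    ultimately show ?thesis
      unfolding r1_def by simp
  qed
  then have "rw \<beta> \<gamma> d k \<le> (\<Prod>j<d. \<nu> powr (\<beta> / \<alpha>) / \<gamma> j)"
    unfolding rw_def by (intro prod_mono) (auto intro: order_trans[OF zero_le_one r1_ge_1])
  then show ?thesis
    by (simp add: prod_dividef)
qed

subsection \<open>Korobov spaces\<close>

lemma korobov_measurable: "f \<in> korobov s \<gamma> d \<Longrightarrow> f \<in> borel_measurable (cube_measure d)"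
  unfolding korobov_def by auto

lemma korobov_summable:
  "f \<in> korobov s \<gamma> d \<Longrightarrow> (\<lambda>k. rw s \<gamma> d k * (norm (fourier d f k))\<^sup>2) summable_on Zd d"
  unfolding korobov_def by auto

lemma korobov_has_sum:
  "f \<in> korobov s \<gamma> d \<Longrightarrow> x \<in> cube d \<Longrightarrow> ((\<lambda>k. fourier d f k * omega d k x) has_sum f x) (Zd d)"
  unfolding korobov_def by auto

lemma korobov_integrable:
  assumes "f \<in> korobov s \<gamma> d"
  shows "integrable (cube_measure d) f"
proof -
  interpret prob_space "cube_measure d"
    by (rule prob_space_cube_measure)
  have "integrable (cube_measure d) (\<lambda>x. 1 + (norm (f x))\<^sup>2)"
    using assms unfolding korobov_def by auto
  then show ?thesis
  proof (rule Bochner_Integration.integrable_bound)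
    show "AE x in cube_measure d. norm (f x) \<le> norm (1 + (norm (f x))\<^sup>2)"
    proof (rule AE_I2)
      fix x
      have "0 \<le> (norm (f x) - 1)\<^sup>2"
        by simp
      then have "2 * norm (f x) \<le> (norm (f x))\<^sup>2 + 1"
        unfolding power2_diff by simp
      then have "norm (f x) \<le> 1 + (norm (f x))\<^sup>2"
        using norm_ge_zero[of "f x"] by linarith
      then show "norm (f x) \<le> norm (1 + (norm (f x))\<^sup>2)"
        by simp
    qed
  qed (rule korobov_measurable[OF assms])
qed

lemma korobov_integrable_mult_cnj_omega:
  assumes "f \<in> korobov s \<gamma> d"
  shows "integrable (cube_measure d) (\<lambda>x. f x * cnj (omega d k x))"
proof -
  have "(\<lambda>x. f x * cnj (omega d k x)) \<in> borel_measurable (cube_measure d)"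
    unfolding cnj_omega by (intro borel_measurable_times korobov_measurable[OF assms] measurable_omega)
  then show ?thesis
    by (intro Bochner_Integration.integrable_bound[OF korobov_integrable[OF assms]]) (auto simp: norm_mult)
qed

lemma korobov_norm_nonneg: "0 \<le> korobov_norm s \<gamma> d f"
  unfolding korobov_norm_def
  by (intro real_sqrt_ge_zero infsum_nonneg mult_nonneg_nonneg order_trans[OF zero_le_one rw_ge_1]) auto

lemma power2_korobov_norm:
  "(korobov_norm s \<gamma> d f)\<^sup>2 = (\<Sum>\<^sub>\<infinity>k\<in>Zd d. rw s \<gamma> d k * (norm (fourier d f k))\<^sup>2)"
  unfolding korobov_norm_def
  by (subst real_sqrt_pow2) (auto intro!: infsum_nonneg mult_nonneg_nonneg order_trans[OF zero_le_one rw_ge_1])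

lemma sum_rw_fourier_le_korobov_norm:
  assumes "f \<in> korobov s \<gamma> d" "finite F" "F \<subseteq> Zd d"
  shows "(\<Sum>k\<in>F. rw s \<gamma> d k * (norm (fourier d f k))\<^sup>2) \<le> (korobov_norm s \<gamma> d f)\<^sup>2"
  unfolding power2_korobov_norm using assms
  by (intro finite_sum_le_infsum korobov_summable mult_nonneg_nonneg order_trans[OF zero_le_one rw_ge_1]) auto

lemma sum_norm_fourier_le:
  assumes "f \<in> korobov s \<gamma> d" "finite F" "F \<subseteq> Zd d"
  shows "(\<Sum>k\<in>F. norm (fourier d f k)) \<le> sqrt (\<Sum>k\<in>F. 1 / rw s \<gamma> d k) * korobov_norm s \<gamma> d f"
proof -
  have rw_pos: "0 < rw s \<gamma> d k" for k
    using rw_ge_1[of s \<gamma> d k] by simp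
  have "(\<Sum>k\<in>F. norm (fourier d f k))\<^sup>2
      \<le> (\<Sum>k\<in>F. 1 / rw s \<gamma> d k) * (\<Sum>k\<in>F. (norm (fourier d f k))\<^sup>2 / (1 / rw s \<gamma> d k))"
    using rw_pos by (intro Cauchy_Schwarz_ineq_sum_weighted) simp
  also have "(\<Sum>k\<in>F. (norm (fourier d f k))\<^sup>2 / (1 / rw s \<gamma> d k)) = (\<Sum>k\<in>F. rw s \<gamma> d k * (norm (fourier d f k))\<^sup>2)"
    by (simp add: mult.commute)
  also have "(\<Sum>k\<in>F. 1 / rw s \<gamma> d k) * \<dots> \<le> (\<Sum>k\<in>F. 1 / rw s \<gamma> d k) * (korobov_norm s \<gamma> d f)\<^sup>2"
    using rw_pos by (intro mult_left_mono sum_rw_fourier_le_korobov_norm[OF assms] sum_nonneg) (simp add: less_imp_le)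
  finally have "(\<Sum>k\<in>F. norm (fourier d f k)) \<le> sqrt ((\<Sum>k\<in>F. 1 / rw s \<gamma> d k) * (korobov_norm s \<gamma> d f)\<^sup>2)"
    by (rule real_le_rsqrt)
  then show ?thesis
    by (simp add: real_sqrt_mult korobov_norm_nonneg)
qed

lemma integral_eq_fourier_0: "integral\<^sup>L (cube_measure d) f = fourier d f (\<lambda>_. 0)"
  unfolding fourier_def by simp

lemma norm_korobov_le:
  assumes f: "f \<in> korobov s \<gamma> d" and s: "1 / 2 < s" and \<gamma>: "\<forall>j<d. 0 < \<gamma> j \<and> \<gamma> j \<le> 1"
    and x: "x \<in> cube d"
  shows "norm (f x) \<le> sqrt (sum_inv_r1_bound s ^ d) * korobov_norm s \<gamma> d f"
proof (rule has_sum_norm_le[OF korobov_has_sum[OF f x]])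
  fix F assume F: "finite F" "F \<subseteq> Zd d"
  have "(\<Sum>k\<in>F. norm (fourier d f k * omega d k x)) = (\<Sum>k\<in>F. norm (fourier d f k))"
    by (simp add: norm_mult)
  also have "\<dots> \<le> sqrt (\<Sum>k\<in>F. 1 / rw s \<gamma> d k) * korobov_norm s \<gamma> d f"
    by (rule sum_norm_fourier_le[OF f F])
  also have "\<dots> \<le> sqrt (sum_inv_r1_bound s ^ d) * korobov_norm s \<gamma> d f"
    using s \<gamma> F korobov_norm_nonneg by (intro mult_right_mono real_sqrt_le_mono sum_inverse_rw_le)
  finally show "(\<Sum>k\<in>F. norm (fourier d f k * omega d k x)) \<le> sqrt (sum_inv_r1_bound s ^ d) * korobov_norm s \<gamma> d f" .
qed

lemma norm_integral_korobov_le: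
  assumes f: "f \<in> korobov s \<gamma> d" and s: "1 / 2 < s" and \<gamma>: "\<forall>j<d. 0 < \<gamma> j \<and> \<gamma> j \<le> 1"
  shows "norm (integral\<^sup>L (cube_measure d) f) \<le> sqrt (sum_inv_r1_bound s ^ d) * korobov_norm s \<gamma> d f"
proof -
  have zero: "(\<lambda>_. 0) \<in> Zd d"
    unfolding Zd_def by simp
  have "norm (integral\<^sup>L (cube_measure d) f) = (\<Sum>k\<in>{\<lambda>_. 0}. norm (fourier d f k))"
    by (simp add: integral_eq_fourier_0)
  also have "\<dots> \<le> sqrt (\<Sum>k\<in>{\<lambda>_. 0}. 1 / rw s \<gamma> d k) * korobov_norm s \<gamma> d f"
    using zero by (intro sum_norm_fourier_le[OF f]) auto
  also have "\<dots> \<le> sqrt (sum_inv_r1_bound s ^ d) * korobov_norm s \<gamma> d f"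
    using s \<gamma> zero korobov_norm_nonneg by (intro mult_right_mono real_sqrt_le_mono sum_inverse_rw_le) auto
  finally show ?thesis .
qed

lemma fourier_mult_const: "fourier d (\<lambda>x. z * f x) m = z * fourier d f m"
  unfolding fourier_def by (simp add: mult.assoc)

lemma korobov_norm_mult_const: "korobov_norm s \<gamma> d (\<lambda>x. z * f x) = norm z * korobov_norm s \<gamma> d f"
proof -
  have "(\<lambda>k. rw s \<gamma> d k * (norm (fourier d (\<lambda>x. z * f x) k))\<^sup>2)
      = (\<lambda>k. (norm z)\<^sup>2 * (rw s \<gamma> d k * (norm (fourier d f k))\<^sup>2))"
    by (simp add: fourier_mult_const norm_mult power_mult_distrib mult_ac)
  then show ?thesis
    unfolding korobov_norm_def by (simp add: infsum_cmult_right' real_sqrt_mult)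
qed

lemma korobov_mult_const:
  assumes f: "f \<in> korobov s \<gamma> d"
  shows "(\<lambda>x. z * f x) \<in> korobov s \<gamma> d"
proof -
  have "(\<lambda>x. z * f x) \<in> borel_measurable (cube_measure d)"
    using korobov_measurable[OF f] by (intro borel_measurable_times borel_measurable_const)
  moreover have "integrable (cube_measure d) (\<lambda>x. (norm (z * f x))\<^sup>2)"
    using f unfolding korobov_def by (auto simp: norm_mult power_mult_distrib)
  moreover have "(\<lambda>k. rw s \<gamma> d k * (norm (fourier d (\<lambda>x. z * f x) k))\<^sup>2) summable_on Zd d"
    using summable_on_cmult_right[OF korobov_summable[OF f], of "(norm z)\<^sup>2"]
    by (simp add: fourier_mult_const norm_mult power_mult_distrib mult.left_commute)
  moreover have "((\<lambda>k. fourier d (\<lambda>x. z * f x) k * omega d k x) has_sum (z * f x)) (Zd d)"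
    if "x \<in> cube d" for x
    using has_sum_cmult_right[OF korobov_has_sum[OF f that], of z] by (simp add: fourier_mult_const mult.assoc)
  ultimately show ?thesis
    unfolding korobov_def by auto
qed

subsection \<open>Multiplication by \<open>phi_K\<close>\<close>

lemma fourier_mult_phi_K:
  assumes g: "g \<in> korobov s \<gamma> d" and K: "finite K"
  shows "fourier d (\<lambda>x. g x * phi_K d K N xs c x) m
    = (\<Sum>k\<in>K. phi_check d N xs c k * fourier d g (\<lambda>i. m i + k i))"
proof -
  have "g x * phi_K d K N xs c x * cnj (omega d m x)
      = (\<Sum>k\<in>K. phi_check d N xs c k * (g x * cnj (omega d (\<lambda>i. m i + k i) x)))" for x
    unfolding phi_K_def sum_distrib_left sum_distrib_right
    by (intro sum.cong refl) (simp add: cnj_omega_mult_cnj[symmetric] mult_ac)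
  then show ?thesis
    unfolding fourier_def
    by (simp add: Bochner_Integration.integral_sum integrable_mult_right korobov_integrable_mult_cnj_omega[OF g])
qed

lemma bij_betw_shift_Zd: "k \<in> Zd d \<Longrightarrow> bij_betw (\<lambda>m i. m i + k i) (Zd d) (Zd d)"
  by (rule bij_betw_byWitness[where f' = "\<lambda>m i. m i - k i"]) (auto simp: Zd_def)

lemma has_sum_fourier_mult_phi_K:
  assumes g: "g \<in> korobov s \<gamma> d" and K: "finite K" "K \<subseteq> Zd d" and x: "x \<in> cube d"
  shows "((\<lambda>m. (\<Sum>k\<in>K. phi_check d N xs c k * fourier d g (\<lambda>i. m i + k i)) * omega d m x)
           has_sum (g x * phi_K d K N xs c x)) (Zd d)"
proof -
  have "((\<lambda>m. phi_check d N xs c k * fourier d g (\<lambda>i. m i + k i) * omega d m x)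
      has_sum (phi_check d N xs c k * cnj (omega d k x) * g x)) (Zd d)" if k: "k \<in> K" for k
  proof -
    let ?a = "phi_check d N xs c k * cnj (omega d k x)"
    have "((\<lambda>j. ?a * (fourier d g j * omega d j x)) has_sum (?a * g x)) (Zd d)"
      by (intro has_sum_cmult_right korobov_has_sum[OF g x])
    moreover have "k \<in> Zd d"
      using k K by auto
    ultimately have "((\<lambda>m. ?a * (fourier d g (\<lambda>i. m i + k i) * omega d (\<lambda>i. m i + k i) x)) has_sum (?a * g x)) (Zd d)"
      using has_sum_reindex_bij_betw[OF bij_betw_shift_Zd, of k d "\<lambda>j. ?a * (fourier d g j * omega d j x)"]
      by simp
    moreover have "?a * (fourier d g (\<lambda>i. m i + k i) * omega d (\<lambda>i. m i + k i) x)
        = phi_check d N xs c k * fourier d g (\<lambda>i. m i + k i) * omega d m x" for m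
      using omega_mult_cnj[of d "\<lambda>i. m i + k i" x k] by (simp add: mult_ac)
    ultimately show ?thesis
      by simp
  qed
  then have "((\<lambda>m. \<Sum>k\<in>K. phi_check d N xs c k * fourier d g (\<lambda>i. m i + k i) * omega d m x)
      has_sum (\<Sum>k\<in>K. phi_check d N xs c k * cnj (omega d k x) * g x)) (Zd d)"
    by (rule has_sum_sum[OF K(1)])
  moreover have "(\<Sum>k\<in>K. phi_check d N xs c k * cnj (omega d k x) * g x) = g x * phi_K d K N xs c x"
    unfolding phi_K_def by (simp add: sum_distrib_left sum_distrib_right mult_ac)
  ultimately show ?thesis
    by (simp add: sum_distrib_right)
qed

text \<open>The quasi-submultiplicativity \<open>rw_le_shift\<close> moves the weight of \<open>m\<close> onto \<open>m + k\<close>, at the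
  price of the weight of \<open>k\<close>; Cauchy-Schwarz is taken with exactly these weights.\<close>

lemma rw_mult_norm_sum_shift_le:
  fixes f a :: "(nat \<Rightarrow> int) \<Rightarrow> complex"
  assumes \<beta>: "0 \<le> \<beta>" and \<gamma>: "\<forall>j<d. 0 < \<gamma> j" and a: "\<forall>k\<in>K. norm (a k) \<le> \<mu>"
  shows "rw \<beta> \<gamma> d m * (norm (\<Sum>k\<in>K. a k * f (\<lambda>i. m i + k i)))\<^sup>2
    \<le> \<mu>\<^sup>2 * ((2 powr (2 * \<beta>)) ^ d * (\<Sum>k\<in>K. rw \<beta> \<gamma> d k))
        * (\<Sum>k\<in>K. rw \<beta> \<gamma> d (\<lambda>i. m i + k i) * (norm (f (\<lambda>i. m i + k i)))\<^sup>2)"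
proof (cases "K = {}")
  case False
  define c where "c = (2 powr (2 * \<beta>)) ^ d"
  define R where "R = rw \<beta> \<gamma> d"
  define G where "G k = norm (f (\<lambda>i. m i + k i))" for k
  have c: "0 < c" unfolding c_def by simp
  have R: "1 \<le> R k" for k unfolding R_def by (rule rw_ge_1)
  have \<mu>: "0 \<le> \<mu>" using a False by (meson all_not_in_conv norm_ge_zero order_trans)
  have "norm (\<Sum>k\<in>K. a k * f (\<lambda>i. m i + k i)) \<le> (\<Sum>k\<in>K. \<mu> * G k)"
    unfolding G_def using a by (intro order_trans[OF norm_sum] sum_mono) (auto simp: norm_mult intro: mult_right_mono)
  then have "(norm (\<Sum>k\<in>K. a k * f (\<lambda>i. m i + k i)))\<^sup>2 \<le> (\<mu> * (\<Sum>k\<in>K. G k))\<^sup>2"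
    by (intro power_mono) (auto simp: sum_distrib_left)
  also have "\<dots> = \<mu>\<^sup>2 * (\<Sum>k\<in>K. G k)\<^sup>2"
    by (simp add: power_mult_distrib)
  also have "\<dots> \<le> \<mu>\<^sup>2 * ((\<Sum>k\<in>K. c * R k) * (\<Sum>k\<in>K. (G k)\<^sup>2 / (c * R k)))"
    using c R by (intro mult_left_mono Cauchy_Schwarz_ineq_sum_weighted) (auto intro: mult_pos_pos less_le_trans[OF zero_less_one])
  finally have "R m * (norm (\<Sum>k\<in>K. a k * f (\<lambda>i. m i + k i)))\<^sup>2
      \<le> R m * (\<mu>\<^sup>2 * ((\<Sum>k\<in>K. c * R k) * (\<Sum>k\<in>K. (G k)\<^sup>2 / (c * R k))))"
    using R[of m] by (intro mult_left_mono) auto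
  also have "\<dots> = \<mu>\<^sup>2 * (\<Sum>k\<in>K. c * R k) * (R m * (\<Sum>k\<in>K. (G k)\<^sup>2 / (c * R k)))"
    by (simp only: mult_ac)
  also have "\<dots> = \<mu>\<^sup>2 * (\<Sum>k\<in>K. c * R k) * (\<Sum>k\<in>K. R m * ((G k)\<^sup>2 / (c * R k)))"
    by (simp only: sum_distrib_left[of "R m"])
  also have "\<dots> \<le> \<mu>\<^sup>2 * (\<Sum>k\<in>K. c * R k) * (\<Sum>k\<in>K. R (\<lambda>i. m i + k i) * (G k)\<^sup>2)"
  proof (intro mult_left_mono sum_mono)
    fix k
    have "R m \<le> c * R (\<lambda>i. m i + k i) * R k"
      unfolding R_def c_def using \<beta> \<gamma> by (rule rw_le_shift)
    then have "R m / (c * R k) \<le> R (\<lambda>i. m i + k i)"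
      using c R[of k] by (simp add: divide_le_eq mult_ac)
    then have "R m / (c * R k) * (G k)\<^sup>2 \<le> R (\<lambda>i. m i + k i) * (G k)\<^sup>2"
      by (intro mult_right_mono) auto
    then show "R m * ((G k)\<^sup>2 / (c * R k)) \<le> R (\<lambda>i. m i + k i) * (G k)\<^sup>2"
      by simp
  qed (use c R in \<open>auto intro!: mult_nonneg_nonneg sum_nonneg intro: order_trans[OF zero_le_one]\<close>)
  finally show ?thesis
    unfolding c_def R_def G_def by (simp add: sum_distrib_left)
qed simp

lemma sum_rw_fourier_mult_phi_K_le:
  assumes g: "g \<in> korobov \<alpha> \<gamma> d" and \<beta>: "0 \<le> \<beta>" "\<beta> \<le> \<alpha>" and \<gamma>: "\<forall>j<d. 0 < \<gamma> j"
    and K: "finite K" "K \<subseteq> Zd d" and F: "finite F" "F \<subseteq> Zd d"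
  shows "(\<Sum>m\<in>F. rw \<beta> \<gamma> d m * (norm (fourier d (\<lambda>x. g x * phi_K d K N xs c x) m))\<^sup>2)
    \<le> (mu_bar N c)\<^sup>2 * ((2 powr (2 * \<beta>)) ^ d * (\<Sum>k\<in>K. rw \<beta> \<gamma> d k)) * (real (card K) * (korobov_norm \<alpha> \<gamma> d g)\<^sup>2)"
proof -
  let ?C = "(mu_bar N c)\<^sup>2 * ((2 powr (2 * \<beta>)) ^ d * (\<Sum>k\<in>K. rw \<beta> \<gamma> d k))"
  let ?G = "\<lambda>j. rw \<beta> \<gamma> d j * (norm (fourier d g j))\<^sup>2"
  have C: "0 \<le> ?C"
    by (intro mult_nonneg_nonneg sum_nonneg order_trans[OF zero_le_one rw_ge_1]) auto
  have shifted: "(\<Sum>m\<in>F. ?G (\<lambda>i. m i + k i)) \<le> (korobov_norm \<alpha> \<gamma> d g)\<^sup>2" if k: "k \<in> K" for k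
  proof -
    have bij: "bij_betw (\<lambda>m i. m i + k i) (Zd d) (Zd d)"
      using k K by (intro bij_betw_shift_Zd) auto
    then have inj: "inj_on (\<lambda>m i. m i + k i) F"
      using F bij_betw_imp_inj_on inj_on_subset by blast
    have "(\<Sum>m\<in>F. ?G (\<lambda>i. m i + k i)) = (\<Sum>j\<in>(\<lambda>m i. m i + k i) ` F. ?G j)"
      by (simp add: sum.reindex[OF inj])
    also have "\<dots> \<le> (\<Sum>j\<in>(\<lambda>m i. m i + k i) ` F. rw \<alpha> \<gamma> d j * (norm (fourier d g j))\<^sup>2)"
      using \<beta> \<gamma> by (intro sum_mono mult_right_mono rw_mono) auto
    also have "\<dots> \<le> (korobov_norm \<alpha> \<gamma> d g)\<^sup>2"
      using F bij_betw_imp_surj_on[OF bij] by (intro sum_rw_fourier_le_korobov_norm[OF g]) auto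
    finally show ?thesis .
  qed
  have "(\<Sum>m\<in>F. rw \<beta> \<gamma> d m * (norm (fourier d (\<lambda>x. g x * phi_K d K N xs c x) m))\<^sup>2)
      \<le> (\<Sum>m\<in>F. ?C * (\<Sum>k\<in>K. ?G (\<lambda>i. m i + k i)))"
    unfolding fourier_mult_phi_K[OF g K(1)] using \<beta> \<gamma> norm_phi_check_le
    by (intro sum_mono rw_mult_norm_sum_shift_le) auto
  also have "\<dots> = ?C * (\<Sum>k\<in>K. \<Sum>m\<in>F. ?G (\<lambda>i. m i + k i))"
    by (simp add: sum_distrib_left sum.swap[of _ F K])
  also have "\<dots> \<le> ?C * (\<Sum>k\<in>K. (korobov_norm \<alpha> \<gamma> d g)\<^sup>2)"
    using C shifted by (intro mult_left_mono sum_mono) auto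
  finally show ?thesis
    by simp
qed

lemma
  assumes g: "g \<in> korobov \<alpha> \<gamma> d" and \<beta>: "0 \<le> \<beta>" "\<beta> \<le> \<alpha>" and \<gamma>: "\<forall>j<d. 0 < \<gamma> j"
    and K: "finite K" "K \<subseteq> Zd d"
  shows korobov_mult_phi_K: "(\<lambda>x. g x * phi_K d K N xs c x) \<in> korobov \<beta> \<gamma> d"
    and korobov_norm_mult_phi_K_le: "korobov_norm \<beta> \<gamma> d (\<lambda>x. g x * phi_K d K N xs c x) \<le>
      sqrt ((mu_bar N c)\<^sup>2 * ((2 powr (2 * \<beta>)) ^ d * (\<Sum>k\<in>K. rw \<beta> \<gamma> d k)) * (real (card K) * (korobov_norm \<alpha> \<gamma> d g)\<^sup>2))"
proof -
  let ?h = "\<lambda>x. g x * phi_K d K N xs c x"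
  let ?B = "(mu_bar N c)\<^sup>2 * ((2 powr (2 * \<beta>)) ^ d * (\<Sum>k\<in>K. rw \<beta> \<gamma> d k)) * (real (card K) * (korobov_norm \<alpha> \<gamma> d g)\<^sup>2)"
  have meas: "?h \<in> borel_measurable (cube_measure d)"
    by (intro borel_measurable_times korobov_measurable[OF g] measurable_phi_K)
  define b where "b = (\<Sum>k\<in>K. norm (phi_check d N xs c k))"
  have "integrable (cube_measure d) (\<lambda>x. (norm (?h x))\<^sup>2)"
  proof (rule Bochner_Integration.integrable_bound)
    show "integrable (cube_measure d) (\<lambda>x. b\<^sup>2 * (norm (g x))\<^sup>2)"
      using g unfolding korobov_def by auto
    show "(\<lambda>x. (norm (?h x))\<^sup>2) \<in> borel_measurable (cube_measure d)"
      using meas by measurable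
    show "AE x in cube_measure d. norm ((norm (?h x))\<^sup>2) \<le> norm (b\<^sup>2 * (norm (g x))\<^sup>2)"
    proof (rule AE_I2)
      fix x
      have "norm (?h x) \<le> norm (g x) * b"
        unfolding norm_mult b_def by (intro mult_left_mono norm_phi_K_le) auto
      then have "(norm (?h x))\<^sup>2 \<le> (norm (g x) * b)\<^sup>2"
        by (intro power_mono) auto
      then show "norm ((norm (?h x))\<^sup>2) \<le> norm (b\<^sup>2 * (norm (g x))\<^sup>2)"
        by (simp add: power_mult_distrib mult.commute)
    qed
  qed
  moreover have finite_sums: "(\<Sum>m\<in>F. rw \<beta> \<gamma> d m * (norm (fourier d ?h m))\<^sup>2) \<le> ?B"
    if "finite F" "F \<subseteq> Zd d" for F
    using g \<beta> \<gamma> K that by (rule sum_rw_fourier_mult_phi_K_le)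
  moreover have summable: "(\<lambda>m. rw \<beta> \<gamma> d m * (norm (fourier d ?h m))\<^sup>2) summable_on Zd d"
    using finite_sums
    by (intro nonneg_bdd_above_summable_on mult_nonneg_nonneg order_trans[OF zero_le_one rw_ge_1])
      (auto intro!: bdd_aboveI2)
  moreover have "((\<lambda>m. fourier d ?h m * omega d m x) has_sum ?h x) (Zd d)" if "x \<in> cube d" for x
    unfolding fourier_mult_phi_K[OF g K(1)] by (rule has_sum_fourier_mult_phi_K[OF g K that])
  ultimately show "?h \<in> korobov \<beta> \<gamma> d"
    using meas unfolding korobov_def by auto
  have "(\<Sum>\<^sub>\<infinity>m\<in>Zd d. rw \<beta> \<gamma> d m * (norm (fourier d ?h m))\<^sup>2) \<le> ?B"
    using summable finite_sums by (intro infsum_le_finite_sums) auto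
  then show "korobov_norm \<beta> \<gamma> d ?h \<le> sqrt ?B"
    unfolding korobov_norm_def by (rule real_sqrt_le_mono)
qed

subsection \<open>Lattice rules and the worst-case error\<close>

lemma lattice_pt_in_cube: "lattice_pt d L gen l \<in> cube d"
  unfolding lattice_pt_def cube_def
  by (auto simp: restrict_PiE_iff frac_lt_1 less_imp_le)

lemma norm_lattice_rule_le:
  assumes "0 < L" and "\<And>l. norm (f (lattice_pt d L gen l)) \<le> B"
  shows "norm (lattice_rule d L gen f) \<le> B"
proof -
  have "norm (lattice_rule d L gen f) = (1 / real L) * norm (\<Sum>l<L. f (lattice_pt d L gen l))"
    unfolding lattice_rule_def by (simp add: norm_mult norm_divide)
  also have "\<dots> \<le> (1 / real L) * (\<Sum>l<L. B)"
    by (intro mult_left_mono order_trans[OF norm_sum] sum_mono assms(2)) auto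
  also have "\<dots> = B"
    using assms(1) by simp
  finally show ?thesis .
qed

lemma lattice_error_korobov_le:
  assumes f: "f \<in> korobov s \<gamma> d" and s: "1 / 2 < s" and \<gamma>: "\<forall>j<d. 0 < \<gamma> j \<and> \<gamma> j \<le> 1"
    and L: "0 < L"
  shows "norm (integral\<^sup>L (cube_measure d) f - lattice_rule d L gen f)
    \<le> 2 * (sqrt (sum_inv_r1_bound s ^ d) * korobov_norm s \<gamma> d f)"
proof -
  have "norm (lattice_rule d L gen f) \<le> sqrt (sum_inv_r1_bound s ^ d) * korobov_norm s \<gamma> d f"
    using f s \<gamma> lattice_pt_in_cube by (intro norm_lattice_rule_le[OF L] norm_korobov_le)
  then show ?thesis
    using norm_integral_korobov_le[OF f s \<gamma>]
      norm_triangle_ineq4[of "integral\<^sup>L (cube_measure d) f" "lattice_rule d L gen f"]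
    by linarith
qed

lemma lattice_error_mult_const:
  "norm (integral\<^sup>L (cube_measure d) (\<lambda>x. z * f x) - lattice_rule d L gen (\<lambda>x. z * f x))
    = norm z * norm (integral\<^sup>L (cube_measure d) f - lattice_rule d L gen f)"
proof -
  have "integral\<^sup>L (cube_measure d) (\<lambda>x. z * f x) - lattice_rule d L gen (\<lambda>x. z * f x)
      = z * (integral\<^sup>L (cube_measure d) f - lattice_rule d L gen f)"
    unfolding lattice_rule_def by (simp add: sum_distrib_left[symmetric] algebra_simps)
  then show ?thesis
    by (simp add: norm_mult)
qed

lemma lattice_error_le_wce:
  assumes f: "f \<in> korobov s \<gamma> d" "korobov_norm s \<gamma> d f \<le> 1"
    and s: "1 / 2 < s" and \<gamma>: "\<forall>j<d. 0 < \<gamma> j \<and> \<gamma> j \<le> 1" and L: "0 < L"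
  shows "norm (integral\<^sup>L (cube_measure d) f - lattice_rule d L gen f) \<le> wce s \<gamma> d L gen"
  unfolding wce_def
proof (rule cSup_upper)
  show "bdd_above {norm (integral\<^sup>L (cube_measure d) f - lattice_rule d L gen f) | f.
      f \<in> korobov s \<gamma> d \<and> korobov_norm s \<gamma> d f \<le> 1}"
  proof (rule bdd_aboveI, safe)
    fix f assume f: "f \<in> korobov s \<gamma> d" "korobov_norm s \<gamma> d f \<le> 1"
    have "norm (integral\<^sup>L (cube_measure d) f - lattice_rule d L gen f)
        \<le> 2 * (sqrt (sum_inv_r1_bound s ^ d) * korobov_norm s \<gamma> d f)"
      by (rule lattice_error_korobov_le[OF f(1) s \<gamma> L])
    also have "\<dots> \<le> 2 * (sqrt (sum_inv_r1_bound s ^ d) * 1)"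
      using f(2) sum_inv_r1_bound_ge_1[OF s] by (intro mult_left_mono) auto
    finally show "norm (integral\<^sup>L (cube_measure d) f - lattice_rule d L gen f)
        \<le> 2 * (sqrt (sum_inv_r1_bound s ^ d) * 1)" .
  qed
qed (use f in blast)

lemma lattice_error_le_korobov_norm_mult_wce:
  assumes f: "f \<in> korobov s \<gamma> d" and s: "1 / 2 < s" and \<gamma>: "\<forall>j<d. 0 < \<gamma> j \<and> \<gamma> j \<le> 1" and L: "0 < L"
  shows "norm (integral\<^sup>L (cube_measure d) f - lattice_rule d L gen f) \<le> korobov_norm s \<gamma> d f * wce s \<gamma> d L gen"
proof (cases "korobov_norm s \<gamma> d f = 0")
  case True
  then show ?thesis
    using lattice_error_korobov_le[OF f s \<gamma> L, of gen] by simp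
next
  case False
  let ?n = "korobov_norm s \<gamma> d f"
  have n: "0 < ?n"
    using False korobov_norm_nonneg[of s \<gamma> d f] by linarith
  have "norm (integral\<^sup>L (cube_measure d) (\<lambda>x. complex_of_real (1 / ?n) * f x)
      - lattice_rule d L gen (\<lambda>x. complex_of_real (1 / ?n) * f x)) \<le> wce s \<gamma> d L gen"
  proof (rule lattice_error_le_wce[OF korobov_mult_const[OF f] _ s \<gamma> L])
    show "korobov_norm s \<gamma> d (\<lambda>x. complex_of_real (1 / ?n) * f x) \<le> 1"
      unfolding korobov_norm_mult_const using n by (simp add: norm_divide)
  qed
  then have "norm (integral\<^sup>L (cube_measure d) f - lattice_rule d L gen f) / ?n \<le> wce s \<gamma> d L gen"
    unfolding lattice_error_mult_const using n by (simp add: norm_divide)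
  then show ?thesis
    using n by (simp add: divide_le_eq mult.commute)
qed

subsection \<open>The two error terms\<close>

lemma err1_eq_average_truncation_error:
  assumes g: "g \<in> korobov s \<gamma> d" and K: "finite K"
  shows "err1 d K g N xs c = norm ((1 / of_nat N) *
    (\<Sum>n<N. complex_of_real (c n) * (g (xs n) - (\<Sum>k\<in>K. fourier d g k * omega d k (xs n)))))"
proof -
  have "integral\<^sup>L (cube_measure d) (\<lambda>x. g x * phi_K d K N xs c x) = (\<Sum>k\<in>K. phi_check d N xs c k * fourier d g k)"
    by (simp add: integral_eq_fourier_0 fourier_mult_phi_K[OF g K])
  also have "\<dots> = (1 / of_nat N) * (\<Sum>k\<in>K. \<Sum>n<N. complex_of_real (c n) * (fourier d g k * omega d k (xs n)))"
    unfolding phi_check_def by (simp add: sum_distrib_left sum_distrib_right mult_ac)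
  also have "\<dots> = (1 / of_nat N) * (\<Sum>n<N. complex_of_real (c n) * (\<Sum>k\<in>K. fourier d g k * omega d k (xs n)))"
    by (subst sum.swap) (simp add: sum_distrib_left)
  finally show ?thesis
    unfolding err1_def by (simp add: sum_subtractf right_diff_distrib)
qed

lemma norm_korobov_minus_Rset_partial_sum_le:
  assumes \<alpha>: "1 / 2 < \<alpha>" and \<gamma>: "\<forall>j<d. 0 < \<gamma> j \<and> \<gamma> j \<le> 1" and \<nu>: "1 < \<nu>"
    and g: "g \<in> korobov \<alpha> \<gamma> d" and x: "x \<in> cube d"
  shows "norm (g x - (\<Sum>k\<in>Rset \<alpha> \<nu> \<gamma> d. fourier d g k * omega d k x))
    \<le> sqrt (real d * (sum_inv_r1_bound \<alpha> ^ d * (2 * (2 * \<alpha> / (2 * \<alpha> - 1)) * \<nu> powr (1 / (2 * \<alpha>) - 1))))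
      * korobov_norm \<alpha> \<gamma> d g"
proof -
  let ?K = "Rset \<alpha> \<nu> \<gamma> d"
  have K: "finite ?K"
    using \<alpha> \<gamma> \<nu> by (intro finite_Rset) auto
  have "((\<lambda>k. fourier d g k * omega d k x) has_sum (g x - (\<Sum>k\<in>?K. fourier d g k * omega d k x))) (Zd d - ?K)"
    by (rule has_sum_Diff[OF korobov_has_sum[OF g x] has_sum_finiteI[OF K refl] Rset_subset_Zd])
  then show ?thesis
  proof (rule has_sum_norm_le)
    fix F assume F: "finite F" "F \<subseteq> Zd d - ?K"
    have "(\<Sum>k\<in>F. norm (fourier d g k * omega d k x)) = (\<Sum>k\<in>F. norm (fourier d g k))"
      by (simp add: norm_mult)
    also have "\<dots> \<le> sqrt (\<Sum>k\<in>F. 1 / rw \<alpha> \<gamma> d k) * korobov_norm \<alpha> \<gamma> d g"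
      using F by (intro sum_norm_fourier_le[OF g]) auto
    also have "\<dots> \<le> sqrt (real d * (sum_inv_r1_bound \<alpha> ^ d * (2 * (2 * \<alpha> / (2 * \<alpha> - 1)) * \<nu> powr (1 / (2 * \<alpha>) - 1))))
        * korobov_norm \<alpha> \<gamma> d g"
      using korobov_norm_nonneg F \<alpha> \<gamma> \<nu>
      by (intro mult_right_mono real_sqrt_le_mono sum_inverse_rw_outside_Rset_le) auto
    finally show "(\<Sum>k\<in>F. norm (fourier d g k * omega d k x))
      \<le> sqrt (real d * (sum_inv_r1_bound \<alpha> ^ d * (2 * (2 * \<alpha> / (2 * \<alpha> - 1)) * \<nu> powr (1 / (2 * \<alpha>) - 1))))
        * korobov_norm \<alpha> \<gamma> d g" .
  qed
qed

definition err1_const :: "real \<Rightarrow> nat \<Rightarrow> real" where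
  "err1_const \<alpha> d = sqrt (real d * (sum_inv_r1_bound \<alpha> ^ d * (2 * (2 * \<alpha> / (2 * \<alpha> - 1)))))"

lemma err1_const_nonneg: "1 / 2 < \<alpha> \<Longrightarrow> 0 \<le> err1_const \<alpha> d"
  unfolding err1_const_def using sum_inv_r1_bound_ge_1[of \<alpha>] by simp

lemma err1_Rset_le:
  assumes \<alpha>: "1 / 2 < \<alpha>" and \<gamma>: "\<forall>j<d. 0 < \<gamma> j \<and> \<gamma> j \<le> 1" and \<nu>: "1 < \<nu>"
    and g: "g \<in> korobov \<alpha> \<gamma> d" and xs: "\<forall>n<N. xs n \<in> cube d"
  shows "err1 d (Rset \<alpha> \<nu> \<gamma> d) g N xs c
    \<le> err1_const \<alpha> d * korobov_norm \<alpha> \<gamma> d g * (1 / \<nu> powr (1 / 2 - 1 / (4 * \<alpha>))) * mu_bar N c"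
proof -
  define B where "B = err1_const \<alpha> d * korobov_norm \<alpha> \<gamma> d g * (1 / \<nu> powr (1 / 2 - 1 / (4 * \<alpha>)))"
  have "(1 / (2 * \<alpha>) - 1) / 2 = - (1 / 2 - 1 / (4 * \<alpha>))"
    using \<alpha> by (simp add: field_simps)
  then have "sqrt (\<nu> powr (1 / (2 * \<alpha>) - 1)) = 1 / \<nu> powr (1 / 2 - 1 / (4 * \<alpha>))"
    using \<nu> by (metis powr_half_sqrt_powr powr_minus_divide less_imp_le order.strict_trans zero_less_one)
  moreover have "sqrt (real d * (sum_inv_r1_bound \<alpha> ^ d * (2 * (2 * \<alpha> / (2 * \<alpha> - 1)) * \<nu> powr (1 / (2 * \<alpha>) - 1))))
      = err1_const \<alpha> d * sqrt (\<nu> powr (1 / (2 * \<alpha>) - 1))"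
    unfolding err1_const_def by (simp only: real_sqrt_mult[symmetric] mult_ac)
  ultimately have "sqrt (real d * (sum_inv_r1_bound \<alpha> ^ d * (2 * (2 * \<alpha> / (2 * \<alpha> - 1)) * \<nu> powr (1 / (2 * \<alpha>) - 1))))
      * korobov_norm \<alpha> \<gamma> d g = B"
    unfolding B_def by (simp only: mult_ac)
  then have truncation: "norm (g (xs n) - (\<Sum>k\<in>Rset \<alpha> \<nu> \<gamma> d. fourier d g k * omega d k (xs n))) \<le> B"
    if "n < N" for n
    using norm_korobov_minus_Rset_partial_sum_le[OF \<alpha> \<gamma> \<nu> g] xs that by metis
  have "err1 d (Rset \<alpha> \<nu> \<gamma> d) g N xs c = (1 / real N) *
      norm (\<Sum>n<N. complex_of_real (c n) * (g (xs n) - (\<Sum>k\<in>Rset \<alpha> \<nu> \<gamma> d. fourier d g k * omega d k (xs n))))"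
    using \<alpha> \<gamma> \<nu> by (simp add: err1_eq_average_truncation_error[OF g] finite_Rset norm_mult norm_divide)
  also have "\<dots> \<le> (1 / real N) * (\<Sum>n<N. \<bar>c n\<bar> * B)"
    using truncation
    by (intro mult_left_mono order_trans[OF norm_sum] sum_mono) (auto simp: norm_mult intro!: mult_left_mono)
  also have "\<dots> = B * mu_bar N c"
    unfolding mu_bar_def by (simp add: sum_distrib_left mult_ac)
  finally show ?thesis
    unfolding B_def .
qed

definition err2_const :: "real \<Rightarrow> (nat \<Rightarrow> real) \<Rightarrow> nat \<Rightarrow> real" where
  "err2_const \<alpha> \<gamma> d = sqrt ((2 powr (2 * \<alpha>)) ^ d * 9 ^ d / (\<Prod>j<d. \<gamma> j))"

lemma err2_const_nonneg: "\<forall>j<d. 0 < \<gamma> j \<Longrightarrow> 0 \<le> err2_const \<alpha> \<gamma> d"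
  unfolding err2_const_def
  by (intro real_sqrt_ge_zero divide_nonneg_nonneg mult_nonneg_nonneg prod_nonneg) (auto simp: less_imp_le)

lemma card_Rset_power2_mult_le:
  assumes \<alpha>: "0 < \<alpha>" and \<gamma>: "\<forall>j<d. 0 < \<gamma> j \<and> \<gamma> j \<le> 1" and \<nu>: "1 < \<nu>" and \<beta>: "\<beta> \<le> \<alpha> - 1 / 2"
  shows "(real (card (Rset \<alpha> \<nu> \<gamma> d)))\<^sup>2 * (\<nu> powr (\<beta> / \<alpha>)) ^ d
    \<le> 9 ^ d * (\<nu> powr ((1 / 2 + 1 / (4 * \<alpha>)) * real d))\<^sup>2"
proof -
  let ?u = "\<nu> powr (1 / (2 * \<alpha>))"
  have "?u * ?u * \<nu> powr (\<beta> / \<alpha>) = \<nu> powr (1 / (2 * \<alpha>) + 1 / (2 * \<alpha>) + \<beta> / \<alpha>)"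
    by (simp only: powr_add)
  also have "\<dots> \<le> \<nu> powr (1 + 1 / (2 * \<alpha>))"
  proof (rule powr_mono)
    have "1 / (2 * \<alpha>) + 1 / (2 * \<alpha>) + \<beta> / \<alpha> = (1 + \<beta>) / \<alpha>"
      using \<alpha> by (simp add: field_simps)
    also have "\<dots> \<le> (\<alpha> + 1 / 2) / \<alpha>"
      using \<alpha> \<beta> by (intro divide_right_mono) auto
    also have "\<dots> = 1 + 1 / (2 * \<alpha>)"
      using \<alpha> by (simp add: field_simps)
    finally show "1 / (2 * \<alpha>) + 1 / (2 * \<alpha>) + \<beta> / \<alpha> \<le> 1 + 1 / (2 * \<alpha>)" .
  qed (use \<nu> in simp)
  finally have base: "(3 * ?u) * (3 * ?u) * \<nu> powr (\<beta> / \<alpha>) \<le> 9 * \<nu> powr (1 + 1 / (2 * \<alpha>))"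
    by simp
  have "(real (card (Rset \<alpha> \<nu> \<gamma> d)))\<^sup>2 * (\<nu> powr (\<beta> / \<alpha>)) ^ d \<le> ((3 * ?u) ^ d)\<^sup>2 * (\<nu> powr (\<beta> / \<alpha>)) ^ d"
    using card_Rset_le[OF \<alpha> \<gamma> \<nu>] by (intro mult_right_mono power_mono) auto
  also have "\<dots> = ((3 * ?u) * (3 * ?u) * \<nu> powr (\<beta> / \<alpha>)) ^ d"
    by (simp only: power2_eq_square power_mult_distrib[symmetric])
  also have "\<dots> \<le> (9 * \<nu> powr (1 + 1 / (2 * \<alpha>))) ^ d"
    using base by (intro power_mono) auto
  also have "\<dots> = 9 ^ d * \<nu> powr (real d * (1 + 1 / (2 * \<alpha>)))"
    using \<nu> by (simp add: power_mult_distrib powr_power)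
  also have "real d * (1 + 1 / (2 * \<alpha>)) = real 2 * ((1 / 2 + 1 / (4 * \<alpha>)) * real d)"
    using \<alpha> by (simp add: field_simps)
  also have "\<nu> powr (real 2 * ((1 / 2 + 1 / (4 * \<alpha>)) * real d)) = (\<nu> powr ((1 / 2 + 1 / (4 * \<alpha>)) * real d))\<^sup>2"
    using \<nu> by (simp only: powr_power[symmetric])
  finally show ?thesis .
qed

lemma korobov_norm_mult_phi_K_Rset_le:
  assumes \<alpha>: "0 < \<alpha>" and \<gamma>: "\<forall>j<d. 0 < \<gamma> j \<and> \<gamma> j \<le> 1" and \<nu>: "1 < \<nu>"
    and \<beta>: "0 < \<beta>" "\<beta> \<le> \<alpha> - 1 / 2" and g: "g \<in> korobov \<alpha> \<gamma> d"
  shows "korobov_norm \<beta> \<gamma> d (\<lambda>x. g x * phi_K d (Rset \<alpha> \<nu> \<gamma> d) N xs c x)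
    \<le> err2_const \<alpha> \<gamma> d * korobov_norm \<alpha> \<gamma> d g * \<nu> powr ((1 / 2 + 1 / (4 * \<alpha>)) * real d) * mu_bar N c"
proof -
  define K where "K = Rset \<alpha> \<nu> \<gamma> d"
  define \<Gamma> where "\<Gamma> = (\<Prod>j<d. \<gamma> j)"
  define V where "V = \<nu> powr ((1 / 2 + 1 / (4 * \<alpha>)) * real d)"
  let ?G = "korobov_norm \<alpha> \<gamma> d g" and ?\<mu> = "mu_bar N c"
  have K: "finite K" "K \<subseteq> Zd d"
    unfolding K_def using \<alpha> \<gamma> \<nu> by (auto intro: finite_Rset Rset_subset_Zd[THEN subsetD])
  have \<Gamma>: "0 < \<Gamma>"
    unfolding \<Gamma>_def using \<gamma> by (intro prod_pos) auto
  have sum_rw: "(\<Sum>k\<in>K. rw \<beta> \<gamma> d k) \<le> real (card K) * ((\<nu> powr (\<beta> / \<alpha>)) ^ d / \<Gamma>)"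
    unfolding \<Gamma>_def K_def using \<alpha> \<beta> \<gamma> \<nu> by (intro sum_bounded_above rw_le_on_Rset) auto
  have "(?\<mu>)\<^sup>2 * ((2 powr (2 * \<beta>)) ^ d * (\<Sum>k\<in>K. rw \<beta> \<gamma> d k)) * (real (card K) * ?G\<^sup>2)
      \<le> (?\<mu>)\<^sup>2 * ((2 powr (2 * \<alpha>)) ^ d * (real (card K) * ((\<nu> powr (\<beta> / \<alpha>)) ^ d / \<Gamma>))) * (real (card K) * ?G\<^sup>2)"
    using \<beta> sum_rw by (intro mult_right_mono mult_left_mono mult_mono power_mono powr_mono sum_nonneg)
      (auto intro: order_trans[OF zero_le_one rw_ge_1])
  also have "\<dots> = (2 powr (2 * \<alpha>)) ^ d / \<Gamma> * ((real (card K))\<^sup>2 * (\<nu> powr (\<beta> / \<alpha>)) ^ d) * (?\<mu> * ?G)\<^sup>2"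
    by (simp add: power2_eq_square)
  also have "\<dots> \<le> (2 powr (2 * \<alpha>)) ^ d / \<Gamma> * (9 ^ d * V\<^sup>2) * (?\<mu> * ?G)\<^sup>2"
    unfolding K_def V_def using \<alpha> \<beta> \<gamma> \<nu> \<Gamma>
    by (intro mult_right_mono mult_left_mono card_Rset_power2_mult_le) auto
  also have "\<dots> = (err2_const \<alpha> \<gamma> d * ?G * V * ?\<mu>)\<^sup>2"
    unfolding err2_const_def \<Gamma>_def[symmetric] using \<Gamma> by (simp add: power_mult_distrib)
  finally have "korobov_norm \<beta> \<gamma> d (\<lambda>x. g x * phi_K d K N xs c x) \<le> sqrt ((err2_const \<alpha> \<gamma> d * ?G * V * ?\<mu>)\<^sup>2)"
    using \<alpha> \<beta> \<gamma> K by (intro order_trans[OF korobov_norm_mult_phi_K_le[OF g]] real_sqrt_le_mono) auto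
  also have "\<dots> = err2_const \<alpha> \<gamma> d * ?G * V * ?\<mu>"
    using \<gamma> by (simp add: err2_const_nonneg korobov_norm_nonneg mu_bar_nonneg V_def)
  finally show ?thesis
    unfolding K_def V_def .
qed

lemma Cgd_nonneg: "0 \<le> Cgd \<gamma> d \<beta> \<tau>"
  unfolding Cgd_def by (intro mult_nonneg_nonneg prod_nonneg) auto

lemma err2_Rset_le:
  assumes \<delta>: "0 < \<delta>" "\<delta> < \<alpha> - 1" and \<gamma>: "\<forall>j<d. 0 < \<gamma> j \<and> \<gamma> j \<le> 1" and \<nu>: "1 < \<nu>"
    and g: "g \<in> korobov \<alpha> \<gamma> d" and L: "0 < L"
    and wce: "wce (\<alpha> - 1/2 - \<delta>) \<gamma> d L gen \<le> Cgd \<gamma> d (\<alpha> - 1/2 - \<delta>) \<tau> * real L powr (- (\<alpha> - 1/2 - \<delta>) + \<tau>)"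
  shows "err2 d (Rset \<alpha> \<nu> \<gamma> d) g N xs c L gen
    \<le> err2_const \<alpha> \<gamma> d * korobov_norm \<alpha> \<gamma> d g
      * (\<nu> powr ((1/2 + 1 / (4 * \<alpha>)) * real d) / real L powr (\<alpha> - 1/2 - \<delta> - \<tau>) * Cgd \<gamma> d (\<alpha> - 1/2 - \<delta>) \<tau>)
      * mu_bar N c"
proof -
  define \<beta> where "\<beta> = \<alpha> - 1/2 - \<delta>"
  define K where "K = Rset \<alpha> \<nu> \<gamma> d"
  let ?h = "\<lambda>x. g x * phi_K d K N xs c x"
  have \<beta>: "1 / 2 < \<beta>" "\<beta> \<le> \<alpha> - 1 / 2"
    unfolding \<beta>_def using \<delta> by auto
  have K: "finite K" "K \<subseteq> Zd d"
    unfolding K_def using \<delta> \<gamma> \<nu> by (auto intro: finite_Rset Rset_subset_Zd[THEN subsetD])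
  have "err2 d K g N xs c L gen \<le> korobov_norm \<beta> \<gamma> d ?h * wce \<beta> \<gamma> d L gen"
    unfolding err2_def using \<beta> \<gamma> K L
    by (intro lattice_error_le_korobov_norm_mult_wce korobov_mult_phi_K[OF g]) auto
  also have "\<dots> \<le> korobov_norm \<beta> \<gamma> d ?h * (Cgd \<gamma> d \<beta> \<tau> * real L powr (- \<beta> + \<tau>))"
    using wce unfolding \<beta>_def by (intro mult_left_mono korobov_norm_nonneg) auto
  also have "\<dots> \<le> (err2_const \<alpha> \<gamma> d * korobov_norm \<alpha> \<gamma> d g * \<nu> powr ((1/2 + 1 / (4 * \<alpha>)) * real d) * mu_bar N c)
      * (Cgd \<gamma> d \<beta> \<tau> * real L powr (- \<beta> + \<tau>))"
  proof (rule mult_right_mono)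
    show "korobov_norm \<beta> \<gamma> d ?h
        \<le> err2_const \<alpha> \<gamma> d * korobov_norm \<alpha> \<gamma> d g * \<nu> powr ((1/2 + 1 / (4 * \<alpha>)) * real d) * mu_bar N c"
      unfolding K_def by (rule korobov_norm_mult_phi_K_Rset_le) (use \<delta> \<gamma> \<nu> \<beta> g in auto)
  qed (simp add: Cgd_nonneg)
  also have "\<dots> = err2_const \<alpha> \<gamma> d * korobov_norm \<alpha> \<gamma> d g
      * (\<nu> powr ((1/2 + 1 / (4 * \<alpha>)) * real d) / real L powr (\<beta> - \<tau>) * Cgd \<gamma> d \<beta> \<tau>) * mu_bar N c"
  proof -
    have "- \<beta> + \<tau> = - (\<beta> - \<tau>)"
      by simp
    then have "real L powr (- \<beta> + \<tau>) = 1 / real L powr (\<beta> - \<tau>)"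
      by (simp only: powr_minus_divide)
    then show ?thesis
      by (simp only: divide_inverse mult_1_left mult_ac)
  qed
  finally show ?thesis
    unfolding K_def \<beta>_def .
qed

lemma rzeta_nonneg:
  assumes "1 < s"
  shows "0 \<le> rzeta s"
proof -
  have "summable (\<lambda>n. real n powr (-s))"
    using assms by (subst summable_real_powr_iff) auto
  then have "summable (\<lambda>n. 1 / real (Suc n) powr s)"
    by (subst (asm) summable_Suc_iff[symmetric]) (simp add: powr_minus_divide)
  then show ?thesis
    unfolding rzeta_def by (intro suminf_nonneg) auto
qed

lemma zeta_dd_ge_1: "0 < \<delta> \<Longrightarrow> 1 \<le> zeta_dd \<delta> d"
  unfolding zeta_dd_def using rzeta_nonneg[of "1 + 2 * \<delta>"] by (intro ge_one_powr_ge_zero) auto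

lemma c_agd_ge_1: "1 \<le> c_agd \<alpha> \<gamma> d"
  unfolding c_agd_def by (simp add: prod_ge_1)

lemma err1_plus_err2_Rset_le:
  assumes \<alpha>: "1 < \<alpha>" and \<gamma>: "\<forall>j<d. 0 < \<gamma> j \<and> \<gamma> j \<le> 1" and \<delta>: "0 < \<delta>" "\<delta> < \<alpha> - 1"
    and \<nu>: "1 < \<nu>" and g: "g \<in> korobov \<alpha> \<gamma> d" and xs: "\<forall>n<N. xs n \<in> cube d" and L: "0 < L"
    and wce: "wce (\<alpha> - 1/2 - \<delta>) \<gamma> d L gen \<le> Cgd \<gamma> d (\<alpha> - 1/2 - \<delta>) \<tau> * real L powr (- (\<alpha> - 1/2 - \<delta>) + \<tau>)"
  shows "err1 d (Rset \<alpha> \<nu> \<gamma> d) g N xs c + err2 d (Rset \<alpha> \<nu> \<gamma> d) g N xs c L gen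
    \<le> (max (err1_const \<alpha> d) (err2_const \<alpha> \<gamma> d) + 1) * korobov_norm \<alpha> \<gamma> d g *
      (1 / \<nu> powr (1/2 - 1 / (4 * \<alpha>))
       + \<nu> powr ((1/2 + 1 / (4 * \<alpha>)) * real d) / real L powr (\<alpha> - 1/2 - \<delta> - \<tau>)
         * c_agd \<alpha> \<gamma> d * zeta_dd \<delta> d * Cgd \<gamma> d (\<alpha> - 1/2 - \<delta>) \<tau>)
      * mu_bar N c"
    (is "?e1 + ?e2 \<le> ?C * ?G * (?A + ?E * ?c * ?z * ?Cg) * ?\<mu>")
proof -
  have nonneg: "0 \<le> ?G" "0 \<le> ?\<mu>" "0 \<le> ?A" "0 \<le> ?E" "0 \<le> ?Cg"
    by (simp_all add: korobov_norm_nonneg mu_bar_nonneg Cgd_nonneg)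
  have C: "err1_const \<alpha> d \<le> ?C" "err2_const \<alpha> \<gamma> d \<le> ?C" "0 \<le> ?C"
    using err1_const_nonneg[of \<alpha> d] \<alpha> by (auto simp: max_def)
  have "?e1 \<le> err1_const \<alpha> d * ?G * ?A * ?\<mu>"
    using \<alpha> by (intro err1_Rset_le \<gamma> \<nu> g xs) auto
  also have "\<dots> \<le> ?C * ?G * ?A * ?\<mu>"
    using C nonneg by (intro mult_right_mono) auto
  finally have e1: "?e1 \<le> ?C * ?G * ?A * ?\<mu>" .
  have "1 * 1 \<le> ?c * ?z"
    using c_agd_ge_1[of \<alpha> \<gamma> d] zeta_dd_ge_1[OF \<delta>(1), of d] by (intro mult_mono) auto
  then have "?E * ?Cg * 1 \<le> ?E * ?Cg * (?c * ?z)"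
    using nonneg by (intro mult_left_mono) auto
  then have Cg_le: "?E * ?Cg \<le> ?E * ?c * ?z * ?Cg"
    by (simp add: mult_ac)
  have "?e2 \<le> err2_const \<alpha> \<gamma> d * ?G * (?E * ?Cg) * ?\<mu>"
    by (rule err2_Rset_le[OF \<delta> \<gamma> \<nu> g L wce])
  also have "\<dots> \<le> ?C * ?G * (?E * ?c * ?z * ?Cg) * ?\<mu>"
  proof (rule mult_right_mono)
    have "err2_const \<alpha> \<gamma> d * ?G \<le> ?C * ?G"
      using C nonneg by (intro mult_right_mono) auto
    from this Cg_le show "err2_const \<alpha> \<gamma> d * ?G * (?E * ?Cg) \<le> ?C * ?G * (?E * ?c * ?z * ?Cg)"
      by (rule mult_mono) (use C nonneg in \<open>auto intro: mult_nonneg_nonneg\<close>)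
  qed (rule nonneg)
  finally have e2: "?e2 \<le> ?C * ?G * (?E * ?c * ?z * ?Cg) * ?\<mu>" .
  have "?C * ?G * ?A * ?\<mu> + ?C * ?G * (?E * ?c * ?z * ?Cg) * ?\<mu> = ?C * ?G * (?A + ?E * ?c * ?z * ?Cg) * ?\<mu>"
    by (simp only: distrib_left distrib_right)
  with e1 e2 show ?thesis
    by linarith
qed

theorem theorem3p15:
  fixes \<alpha> :: real and d :: nat and \<gamma> :: "nat \<Rightarrow> real"
  assumes "\<alpha> > 1"
    and "\<forall>j<d. 0 < \<gamma> j \<and> \<gamma> j \<le> 1"
    and "\<forall>i j. i \<le> j \<and> j < d \<longrightarrow> \<gamma> j \<le> \<gamma> i"
  shows "\<exists>C>0. \<forall>\<delta> \<tau> g N xs c L gen \<nu>.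
     0 < \<delta> \<and> \<delta> < \<alpha> - 1 \<and> 0 < \<tau> \<and> \<tau> \<le> \<alpha> - 1 - \<delta> \<and>
     g \<in> korobov \<alpha> \<gamma> d \<and>
     0 < N \<and> (\<forall>n<N. xs n \<in> cube d) \<and>
     prime L \<and> (\<forall>j<d. 1 \<le> gen j \<and> gen j \<le> L - 1) \<and>
     (\<forall>\<tau>'. 0 < \<tau>' \<and> \<tau>' \<le> (\<alpha> - 1/2 - \<delta>) - 1/2 \<longrightarrow>
        wce (\<alpha> - 1/2 - \<delta>) \<gamma> d L gen
          \<le> Cgd \<gamma> d (\<alpha> - 1/2 - \<delta>) \<tau>' * real L powr (- (\<alpha> - 1/2 - \<delta>) + \<tau>')) \<and>
     1 < \<nu>
     \<longrightarrow>
     err1 d (Rset \<alpha> \<nu> \<gamma> d) g N xs c + err2 d (Rset \<alpha> \<nu> \<gamma> d) g N xs c L gen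
       \<le> C * korobov_norm \<alpha> \<gamma> d g *
          (1 / \<nu> powr (1/2 - 1 / (4 * \<alpha>))
           + \<nu> powr ((1/2 + 1 / (4 * \<alpha>)) * real d) / real L powr (\<alpha> - 1/2 - \<delta> - \<tau>)
             * c_agd \<alpha> \<gamma> d * zeta_dd \<delta> d * Cgd \<gamma> d (\<alpha> - 1/2 - \<delta>) \<tau>)
          * mu_bar N c"
proof -
  let ?C = "max (err1_const \<alpha> d) (err2_const \<alpha> \<gamma> d) + 1"
  have "0 < ?C"
    using err1_const_nonneg[of \<alpha> d] assms(1) by linarith
  then show ?thesis
  proof (intro exI[of _ ?C] conjI allI impI, goal_cases)
    case (2 \<delta> \<tau> g N xs c L gen \<nu>)
    then have "0 < \<tau> \<and> \<tau> \<le> (\<alpha> - 1/2 - \<delta>) - 1/2"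
      by auto
    with 2 have wce: "wce (\<alpha> - 1/2 - \<delta>) \<gamma> d L gen
        \<le> Cgd \<gamma> d (\<alpha> - 1/2 - \<delta>) \<tau> * real L powr (- (\<alpha> - 1/2 - \<delta>) + \<tau>)"
      by blast
    show ?case
      using 2 by (intro err1_plus_err2_Rset_le[OF assms(1,2) _ _ _ _ _ _ wce]) (auto intro: prime_gt_0_nat)
  qed
qed

end
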